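(* Let $\{D_1,D_2,D_3\}$ be a positively oriented orthonormal basis of $\mathbb{R}^3$ and $J$ a symmetric positive definite linear map on $\mathbb{R}^3$ having $D_3$ as an eigenvector. For a smooth curve $\Lambda:[0,T]\to SO(3)$ the following are equivalent: (i) (Lagrange–d'Alembert) $w\cdot d_3=0$ on $[0,T]$ and there is a continuous $\mu:[0,T]\to\mathbb{R}$ such that $$\frac{d}{d\iota}\Big|_{\iota=0}\int_0^T K(\Lambda_\iota,\dot\Lambda_\iota)\,dt+\int_0^T\mu\,\delta\theta\cdot d_3\,dt=0$$ for every smooth $\delta\theta:[0,T]\to\mathbb{R}^3$ with $\delta\theta(0)=\delta\theta(T)=0$, where $\Lambda_\iota=\exp[\iota\widehat{\delta\theta}]\Lambda$; (ii) there is $\mu:[0,T]\to\mathbb{R}$ such that for all $t$ $$\nabla_{\dot d_3}\pi_\perp+\pi_\parallel\dot d_3=0,\qquad \dot\pi_\parallel+\pi_\perp\cdot\dot d_3+\mu=0,\qquad w\cdot d_3=0 .$$ Moreover, for any $\Lambda$ and $\mu$, the system in (ii) is equivalent to $$\nabla_{\dot d_3}\pi_\perp=0,\qquad \pi_\perp\cdot\dot d_3+\mu=0,\qquad w_\parallel=0,$$ i.e. $\pi_\perp$ is parallel transported along the curve $d_3$ on the unit sphere.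
   Context: Notation: $d_i=\Lambda D_i$; for $v\in\mathbb{R}^3$, $\hat v a=v\times a$; the spatial angular velocity $w$ and convected angular velocity $W$ are defined by $\dot\Lambda=\hat w\Lambda=\Lambda\hat W$, and $w_\parallel=w\cdot d_3$. The kinetic energy is $K=\tfrac12 W\cdot JW=\tfrac12 w\cdot jw$ with $j=\Lambda J\Lambda^T$. The spatial angular momentum is $\pi=jw$, split as $\pi=\pi_\perp+\pi_\parallel d_3$ with $\pi_\parallel=\pi\cdot d_3$, $\pi_\perp=(I-d_3\otimes d_3)\pi$. For a curve $v(t)$ with $v(t)\cdot d_3(t)=0$, $\nabla_{\dot d_3}v:=(I-d_3\otimes d_3)\dot v$ is the covariant derivative on the unit sphere along $d_3$. The constraint $w\cdot d_3=0$ is the non-twisting condition and $\mu$ the associated multiplier. *)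

theory Defs
  imports "HOL-Analysis.Analysis"
begin

type_synonym vec3 = "real^3"
type_synonym mat3 = "real^3^3"

definition hat :: "vec3 \<Rightarrow> mat3" where
  "hat v = matrix (\<lambda>a. cross3 v a)"

text \<open>inverse of hat on skew-symmetric matrices\<close>
definition vee :: "mat3 \<Rightarrow> vec3" where
  "vee A = vector [A$3$2, A$1$3, A$2$1]"

definition SO3 :: "mat3 set" where
  "SO3 = {L. transpose L ** L = mat 1 \<and> det L = 1}"

primrec mpow :: "mat3 \<Rightarrow> nat \<Rightarrow> mat3" where
  "mpow A 0 = mat 1"
| "mpow A (Suc n) = A ** mpow A n"

definition mexp :: "mat3 \<Rightarrow> mat3" where
  "mexp A = (\<Sum>n. (1 / fact n) *\<^sub>R mpow A n)"

primrec nth_vderiv :: "nat \<Rightarrow> real set \<Rightarrow> (real \<Rightarrow> 'a::real_normed_vector) \<Rightarrow> real \<Rightarrow> 'a" where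
  "nth_vderiv 0 S f = f"
| "nth_vderiv (Suc n) S f = (\<lambda>t. vector_derivative (nth_vderiv n S f) (at t within S))"

definition smooth_on :: "real set \<Rightarrow> (real \<Rightarrow> 'a::real_normed_vector) \<Rightarrow> bool" where
  "smooth_on S f \<longleftrightarrow> (\<forall>n. \<forall>t\<in>S.
     (nth_vderiv n S f has_vector_derivative nth_vderiv (Suc n) S f t) (at t within S))"

definition tder :: "real \<Rightarrow> (real \<Rightarrow> 'a::real_normed_vector) \<Rightarrow> real \<Rightarrow> 'a" where
  "tder T f t = vector_derivative f (at t within {0..T})"

definition kin :: "mat3 \<Rightarrow> mat3 \<Rightarrow> mat3 \<Rightarrow> real" where
  "kin J L Ld = (let W = vee (transpose L ** Ld) in (1/2) * (W \<bullet> (J *v W)))"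

definition d3 :: "vec3 \<Rightarrow> (real \<Rightarrow> mat3) \<Rightarrow> real \<Rightarrow> vec3" where
  "d3 D3 \<Lambda> t = \<Lambda> t *v D3"

definition angvel :: "real \<Rightarrow> (real \<Rightarrow> mat3) \<Rightarrow> real \<Rightarrow> vec3" where
  "angvel T \<Lambda> t = vee (tder T \<Lambda> t ** transpose (\<Lambda> t))"

definition angmom :: "mat3 \<Rightarrow> real \<Rightarrow> (real \<Rightarrow> mat3) \<Rightarrow> real \<Rightarrow> vec3" where
  "angmom J T \<Lambda> t = (\<Lambda> t ** J ** transpose (\<Lambda> t)) *v angvel T \<Lambda> t"

definition pi_par :: "mat3 \<Rightarrow> vec3 \<Rightarrow> real \<Rightarrow> (real \<Rightarrow> mat3) \<Rightarrow> real \<Rightarrow> real" where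
  "pi_par J D3 T \<Lambda> t = angmom J T \<Lambda> t \<bullet> d3 D3 \<Lambda> t"

definition pi_perp :: "mat3 \<Rightarrow> vec3 \<Rightarrow> real \<Rightarrow> (real \<Rightarrow> mat3) \<Rightarrow> real \<Rightarrow> vec3" where
  "pi_perp J D3 T \<Lambda> t = angmom J T \<Lambda> t - pi_par J D3 T \<Lambda> t *\<^sub>R d3 D3 \<Lambda> t"

text \<open>covariant derivative along d3: (I - d3 (x) d3) v dot\<close>
definition covd :: "vec3 \<Rightarrow> real \<Rightarrow> (real \<Rightarrow> mat3) \<Rightarrow> (real \<Rightarrow> vec3) \<Rightarrow> real \<Rightarrow> vec3" where
  "covd D3 T \<Lambda> v t = tder T v t - (tder T v t \<bullet> d3 D3 \<Lambda> t) *\<^sub>R d3 D3 \<Lambda> t"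

definition varied :: "(real \<Rightarrow> mat3) \<Rightarrow> (real \<Rightarrow> vec3) \<Rightarrow> real \<Rightarrow> real \<Rightarrow> mat3" where
  "varied \<Lambda> \<delta>\<theta> \<iota> t = mexp (\<iota> *\<^sub>R hat (\<delta>\<theta> t)) ** \<Lambda> t"

definition action :: "mat3 \<Rightarrow> real \<Rightarrow> (real \<Rightarrow> mat3) \<Rightarrow> (real \<Rightarrow> vec3) \<Rightarrow> real \<Rightarrow> real" where
  "action J T \<Lambda> \<delta>\<theta> \<iota> =
     integral {0..T} (\<lambda>t. kin J (varied \<Lambda> \<delta>\<theta> \<iota> t) (tder T (varied \<Lambda> \<delta>\<theta> \<iota>) t))"

end

theory Submission
  imports Defs
begin

text \<open>
  Write d = Lambda D3 and pi = j w. Since J D3 = c D3 and j = Lambda J Lambda^T, we have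
  pi . d = c (w . d); so under the non-twisting constraint pi_par vanishes identically,
  pi_perp = pi, and both the system (ii) and its reduced form say that the tangential part
  (I - d (x) d) pi' of the momentum rate vanishes.
  For (i), differentiating the action along Lambda_iota = exp(iota hat(delta theta)) Lambda
  gives the first variation int pi . delta theta' dt = - int pi' . delta theta dt.  The
  multiplier term only sees the normal component of delta theta, so testing with tangential
  variations (and finally with the bump t (T - t) (I - d (x) d) pi') shows that (i) holds
  exactly when the tangential part of pi' vanishes.  The derivative of the action is computed
  from an expansion of exp(iota hat(delta theta(t))) to first order in iota, uniform in t,
  which justifies differentiating under the integral sign.
\<close>

section \<open>Matrices, the hat map and rotations\<close>

lemma bounded_bilinear_matrix_matrix_mult:
  "bounded_bilinear (\<lambda>(A::real^'n^'m) (B::real^'p^'n). A ** B)"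
proof -
  have "(A + B) ** C = A ** C + B ** C" for A B :: "real^'n^'m" and C :: "real^'p^'n"
    by (simp add: matrix_matrix_mult_def vec_eq_iff sum.distrib distrib_right)
  then show ?thesis
    unfolding bilinear_conv_bounded_bilinear[symmetric] bilinear_def
    by (auto intro!: linearI simp: matrix_add_ldistrib matrix_scalar_ac scalar_matrix_assoc[symmetric])
qed

lemma bounded_bilinear_matrix_vector_mult:
  "bounded_bilinear (\<lambda>(A::real^'n^'m) (x::real^'n). A *v x)"
  unfolding bilinear_conv_bounded_bilinear[symmetric] bilinear_def
  by (auto intro!: linearI simp: matrix_vector_right_distrib matrix_vector_mult_add_rdistrib
      matrix_vector_mult_scaleR scaleR_matrix_vector_assoc)

lemma bounded_linear_transpose: "bounded_linear (transpose :: real^'n^'m \<Rightarrow> real^'m^'n)"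
  unfolding linear_conv_bounded_linear[symmetric]
  by (auto intro!: linearI simp: transpose_def vec_eq_iff)

lemma bounded_linear_vee: "bounded_linear vee"
  unfolding linear_conv_bounded_linear[symmetric]
  by (auto intro!: linearI simp: vee_def vec_eq_iff forall_3)

lemma hat_mult_vector: "hat v *v x = cross3 v x"
  using bilinear_cross unfolding hat_def bilinear_def by (simp add: matrix_works)

lemma hat_components [simp]:
  "hat v $1$1 = 0" "hat v $1$2 = - v$3" "hat v $1$3 = v$2"
  "hat v $2$1 = v$3" "hat v $2$2 = 0" "hat v $2$3 = - v$1"
  "hat v $3$1 = - v$2" "hat v $3$2 = v$1" "hat v $3$3 = 0"
  unfolding hat_def matrix_def by (simp_all add: cross_components axis_def)

lemma bounded_linear_hat: "bounded_linear hat"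
  unfolding linear_conv_bounded_linear[symmetric]
  by (rule linearI) (simp_all add: vec_eq_iff forall_3)

lemma vee_hat [simp]: "vee (hat v) = v"
  by (simp add: vee_def vec_eq_iff forall_3)

lemma transpose_hat: "transpose (hat v) = - hat v"
  by (simp add: transpose_def vec_eq_iff forall_3)

lemma hat_vee:
  assumes skew: "transpose (Y::real^3^3) = - Y"
  shows "hat (vee Y) = Y"
proof -
  have antisym: "Y$j$i = - Y$i$j" for i j
  proof -
    have "transpose Y $ i $ j = (- Y) $ i $ j" using skew by simp
    then show ?thesis by (simp add: transpose_def)
  qed
  have diag: "Y$i$i = 0" for i
    using antisym[of i i] by simp
  show ?thesis
    unfolding vec_eq_iff forall_3
    using diag[of 1] diag[of 2] diag[of 3] antisym[of 1 2] antisym[of 1 3] antisym[of 2 3]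
    by (simp add: vee_def)
qed

lemma inner_matrix_vector_mult: "((A::real^'n^'m) *v x) \<bullet> y = x \<bullet> (transpose A *v y)"
  by (metis dot_lmul_matrix inner_commute transpose_matrix_vector transpose_transpose)

lemma SO3_iff_rotation_matrix: "L \<in> SO3 \<longleftrightarrow> rotation_matrix L"
  by (simp add: SO3_def rotation_matrix_def orthogonal_matrix)

lemma SO3_transpose_mult:
  assumes "L \<in> SO3"
  shows "transpose L ** L = mat 1" "L ** transpose L = mat 1"
  using assms by (simp_all add: SO3_iff_rotation_matrix rotation_matrix_def orthogonal_matrix_def)

lemma rotation_matrix_transpose_SO3: "L \<in> SO3 \<Longrightarrow> rotation_matrix (transpose L)"
  by (simp add: SO3_iff_rotation_matrix rotation_matrix_def orthogonal_matrix_transpose)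

lemma SO3_conjugate_hat:
  assumes L: "L \<in> SO3"
  shows "transpose L ** (hat v ** L) = hat (transpose L *v v)"
proof (rule matrix_eq[THEN iffD2], intro allI)
  fix x
  have "(transpose L ** (hat v ** L)) *v x = transpose L *v cross3 v (L *v x)"
    by (simp add: matrix_vector_mul_assoc[symmetric] hat_mult_vector)
  also have "\<dots> = cross3 (transpose L *v v) (transpose L *v (L *v x))"
    using cross_rotation_matrix[OF rotation_matrix_transpose_SO3[OF L]] by simp
  also have "transpose L *v (L *v x) = x"
    by (simp add: matrix_vector_mul_assoc SO3_transpose_mult[OF L])
  finally show "(transpose L ** (hat v ** L)) *v x = hat (transpose L *v v) *v x"
    by (simp add: hat_mult_vector)
qed

lemmas continuous_on_matrix_matrix_mult [continuous_intros] =
  bounded_bilinear.continuous_on[OF bounded_bilinear_matrix_matrix_mult]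
lemmas continuous_on_matrix_vector_mult [continuous_intros] =
  bounded_bilinear.continuous_on[OF bounded_bilinear_matrix_vector_mult]
lemmas continuous_on_transpose [continuous_intros] =
  bounded_linear.continuous_on[OF bounded_linear_transpose]
lemmas continuous_on_vee [continuous_intros] = bounded_linear.continuous_on[OF bounded_linear_vee]
lemmas continuous_on_hat [continuous_intros] = bounded_linear.continuous_on[OF bounded_linear_hat]

section \<open>Smooth functions on a compact interval\<close>

definition Ck_on :: "nat \<Rightarrow> real set \<Rightarrow> (real \<Rightarrow> 'a::real_normed_vector) \<Rightarrow> bool" where
  "Ck_on k S f \<longleftrightarrow> (\<forall>n<k. \<forall>t\<in>S.
     (nth_vderiv n S f has_vector_derivative nth_vderiv (Suc n) S f t) (at t within S))"

lemma smooth_on_iff_Ck_on: "smooth_on S f \<longleftrightarrow> (\<forall>k. Ck_on k S f)"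
  unfolding smooth_on_def Ck_on_def by blast

lemma Ck_on_0 [simp]: "Ck_on 0 S f"
  unfolding Ck_on_def by simp

lemma Ck_on_SucD: "Ck_on (Suc k) S f \<Longrightarrow> Ck_on k S f"
  unfolding Ck_on_def by simp

lemma nth_vderiv_Suc_inner: "nth_vderiv (Suc n) S f = nth_vderiv n S (nth_vderiv 1 S f)"
  by (induction n) auto

lemma Ck_on_Suc:
  "Ck_on (Suc k) S f \<longleftrightarrow>
     (\<forall>t\<in>S. (f has_vector_derivative nth_vderiv 1 S f t) (at t within S)) \<and> Ck_on k S (nth_vderiv 1 S f)"
  unfolding Ck_on_def All_less_Suc2 One_nat_def
  by (simp only: nth_vderiv_Suc_inner[symmetric, unfolded One_nat_def] nth_vderiv.simps(1))

lemma Ck_on_SucE: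
  assumes "Ck_on (Suc k) S f"
  obtains f' where "\<forall>t\<in>S. (f has_vector_derivative f' t) (at t within S)" "Ck_on k S f'"
  using assms unfolding Ck_on_Suc by blast

lemma vector_derivative_within_cong:
  "t \<in> S \<Longrightarrow> (\<And>x. x \<in> S \<Longrightarrow> f x = g x) \<Longrightarrow>
     vector_derivative f (at t within S) = vector_derivative g (at t within S)"
  by (rule vector_derivative_cong_eq) (auto intro: always_eventually)

lemma nth_vderiv_cong:
  "(\<And>x. x \<in> S \<Longrightarrow> f x = g x) \<Longrightarrow> t \<in> S \<Longrightarrow> nth_vderiv n S f t = nth_vderiv n S g t"
proof (induction n arbitrary: t)
  case (Suc n)
  then show ?case
    by (simp only: nth_vderiv.simps) (rule vector_derivative_within_cong[OF Suc.prems(2)], blast)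
qed simp

lemma Ck_on_cong:
  assumes fg: "\<And>x. x \<in> S \<Longrightarrow> f x = g x" and f: "Ck_on k S f"
  shows "Ck_on k S g"
  unfolding Ck_on_def
proof (intro allI impI ballI)
  fix n t assume "n < k" and t: "t \<in> S"
  then have "(nth_vderiv n S f has_vector_derivative nth_vderiv (Suc n) S f t) (at t within S)"
    using f unfolding Ck_on_def by blast
  then have "(nth_vderiv n S f has_vector_derivative nth_vderiv (Suc n) S g t) (at t within S)"
    by (simp only: nth_vderiv_cong[OF fg t])
  then show "(nth_vderiv n S g has_vector_derivative nth_vderiv (Suc n) S g t) (at t within S)"
    by (rule has_vector_derivative_transform[OF t, rotated]) (rule nth_vderiv_cong[OF fg, symmetric])
qed

declare nth_vderiv.simps(2) [simp del]

locale proper_interval =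
  fixes a b :: real
  assumes a_less_b: "a < b"
begin

lemma nth_vderiv_1_eq:
  "t \<in> {a..b} \<Longrightarrow> (f has_vector_derivative f') (at t within {a..b}) \<Longrightarrow> nth_vderiv 1 {a..b} f t = f'"
  using vector_derivative_within_cbox[of a b t f f'] a_less_b by (simp add: nth_vderiv.simps)

lemma Ck_on_SucI:
  assumes "\<And>t. t \<in> {a..b} \<Longrightarrow> (f has_vector_derivative f' t) (at t within {a..b})"
    and "Ck_on k {a..b} f'"
  shows "Ck_on (Suc k) {a..b} f"
proof -
  have "nth_vderiv 1 {a..b} f t = f' t" if "t \<in> {a..b}" for t
    using nth_vderiv_1_eq[OF that assms(1)[OF that]] .
  then show ?thesis
    unfolding Ck_on_Suc using assms by (auto intro: Ck_on_cong[OF _ assms(2)])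
qed

lemma Ck_on_const: "Ck_on k {a..b} (\<lambda>t. c)"
proof (induction k arbitrary: c)
  case (Suc k)
  show ?case by (rule Ck_on_SucI[OF has_vector_derivative_const Suc.IH[of 0]])
qed simp

lemma Ck_on_ident: "Ck_on k {a..b} (\<lambda>t. t)"
proof (cases k)
  case (Suc m)
  then show ?thesis
    using Ck_on_SucI[OF has_vector_derivative_id Ck_on_const[of m 1]] by simp
qed simp

lemma Ck_on_add: "Ck_on k {a..b} f \<Longrightarrow> Ck_on k {a..b} g \<Longrightarrow> Ck_on k {a..b} (\<lambda>t. f t + g t)"
proof (induction k arbitrary: f g)
  case (Suc k)
  obtain f' where f': "\<forall>t\<in>{a..b}. (f has_vector_derivative f' t) (at t within {a..b})"
      "Ck_on k {a..b} f'"
    by (rule Ck_on_SucE[OF Suc.prems(1)])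
  obtain g' where g': "\<forall>t\<in>{a..b}. (g has_vector_derivative g' t) (at t within {a..b})"
      "Ck_on k {a..b} g'"
    by (rule Ck_on_SucE[OF Suc.prems(2)])
  show ?case
  proof (rule Ck_on_SucI)
    show "((\<lambda>t. f t + g t) has_vector_derivative f' t + g' t) (at t within {a..b})"
      if "t \<in> {a..b}" for t
      using f'(1)[rule_format, OF that] g'(1)[rule_format, OF that] by (rule has_vector_derivative_add)
    show "Ck_on k {a..b} (\<lambda>t. f' t + g' t)"
      by (rule Suc.IH[OF f'(2) g'(2)])
  qed
qed simp

lemma Ck_on_linear:
  "bounded_linear L \<Longrightarrow> Ck_on k {a..b} f \<Longrightarrow> Ck_on k {a..b} (\<lambda>t. L (f t))"
proof (induction k arbitrary: f)
  case (Suc k)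
  obtain f' where f': "\<forall>t\<in>{a..b}. (f has_vector_derivative f' t) (at t within {a..b})"
      "Ck_on k {a..b} f'"
    by (rule Ck_on_SucE[OF Suc.prems(2)])
  show ?case
  proof (rule Ck_on_SucI)
    show "((\<lambda>t. L (f t)) has_vector_derivative L (f' t)) (at t within {a..b})"
      if "t \<in> {a..b}" for t
      by (rule bounded_linear.has_vector_derivative[OF Suc.prems(1) f'(1)[rule_format, OF that]])
    show "Ck_on k {a..b} (\<lambda>t. L (f' t))"
      by (rule Suc.IH[OF Suc.prems(1) f'(2)])
  qed
qed simp

lemma Ck_on_bilinear:
  "bounded_bilinear B \<Longrightarrow> Ck_on k {a..b} f \<Longrightarrow> Ck_on k {a..b} g \<Longrightarrow>
     Ck_on k {a..b} (\<lambda>t. B (f t) (g t))"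
proof (induction k arbitrary: f g)
  case (Suc k)
  obtain f' where f': "\<forall>t\<in>{a..b}. (f has_vector_derivative f' t) (at t within {a..b})"
      "Ck_on k {a..b} f'"
    by (rule Ck_on_SucE[OF Suc.prems(2)])
  obtain g' where g': "\<forall>t\<in>{a..b}. (g has_vector_derivative g' t) (at t within {a..b})"
      "Ck_on k {a..b} g'"
    by (rule Ck_on_SucE[OF Suc.prems(3)])
  show ?case
  proof (rule Ck_on_SucI)
    show "((\<lambda>t. B (f t) (g t)) has_vector_derivative B (f t) (g' t) + B (f' t) (g t))
        (at t within {a..b})" if "t \<in> {a..b}" for t
      by (rule bounded_bilinear.has_vector_derivative[OF Suc.prems(1) f'(1)[rule_format, OF that] g'(1)[rule_format, OF that]])
    show "Ck_on k {a..b} (\<lambda>t. B (f t) (g' t) + B (f' t) (g t))"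
      by (intro Ck_on_add Suc.IH[OF Suc.prems(1)] Ck_on_SucD[OF Suc.prems(2)]
          Ck_on_SucD[OF Suc.prems(3)] f'(2) g'(2))
  qed
qed simp

lemma smooth_on_const: "smooth_on {a..b} (\<lambda>t. c)"
  by (simp add: smooth_on_iff_Ck_on Ck_on_const)

lemma smooth_on_ident: "smooth_on {a..b} (\<lambda>t. t)"
  by (simp add: smooth_on_iff_Ck_on Ck_on_ident)

lemma smooth_on_add:
  "smooth_on {a..b} f \<Longrightarrow> smooth_on {a..b} g \<Longrightarrow> smooth_on {a..b} (\<lambda>t. f t + g t)"
  by (simp add: smooth_on_iff_Ck_on Ck_on_add)

lemma smooth_on_linear:
  "bounded_linear L \<Longrightarrow> smooth_on {a..b} f \<Longrightarrow> smooth_on {a..b} (\<lambda>t. L (f t))"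
  by (simp add: smooth_on_iff_Ck_on Ck_on_linear)

lemma smooth_on_bilinear:
  "bounded_bilinear B \<Longrightarrow> smooth_on {a..b} f \<Longrightarrow> smooth_on {a..b} g \<Longrightarrow>
     smooth_on {a..b} (\<lambda>t. B (f t) (g t))"
  by (simp add: smooth_on_iff_Ck_on Ck_on_bilinear)

lemma smooth_on_diff:
  assumes "smooth_on {a..b} f" "smooth_on {a..b} g"
  shows "smooth_on {a..b} (\<lambda>t. f t - g t)"
proof -
  have "smooth_on {a..b} (\<lambda>t. - g t)"
    by (rule smooth_on_linear[OF bounded_linear_minus[OF bounded_linear_ident] assms(2)])
  from smooth_on_add[OF assms(1) this] show ?thesis by simp
qed

lemma smooth_on_vderiv: "smooth_on {a..b} f \<Longrightarrow> smooth_on {a..b} (nth_vderiv 1 {a..b} f)"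
  by (metis smooth_on_iff_Ck_on Ck_on_Suc)

lemma smooth_on_has_vector_derivative:
  "smooth_on {a..b} f \<Longrightarrow> t \<in> {a..b} \<Longrightarrow>
     (f has_vector_derivative nth_vderiv 1 {a..b} f t) (at t within {a..b})"
  by (metis smooth_on_iff_Ck_on Ck_on_Suc)

lemma smooth_on_imp_continuous_on: "smooth_on {a..b} f \<Longrightarrow> continuous_on {a..b} f"
  by (meson smooth_on_has_vector_derivative continuous_on_eq_continuous_within
      has_vector_derivative_continuous)

end

section \<open>Exponential series\<close>

definition exp_series :: "real \<Rightarrow> (nat \<Rightarrow> 'a::real_normed_vector) \<Rightarrow> 'a" where
  "exp_series s X = (\<Sum>n. (s^n / fact n) *\<^sub>R X n)"

lemma summable_power_divide_fact: "summable (\<lambda>n. (x::real)^n / fact n)"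
  using summable_exp[of x] by (simp add: divide_inverse mult.commute)

lemma norm_exp_series_term_le:
  assumes "norm (X n) \<le> B * q^n"
  shows "norm ((s^n / fact n) *\<^sub>R X n) \<le> B * ((\<bar>s\<bar> * q)^n / fact n)"
proof -
  have "norm ((s^n / fact n) *\<^sub>R X n) = (\<bar>s\<bar>^n / fact n) * norm (X n)"
    by (simp add: power_abs abs_mult)
  also have "\<dots> \<le> (\<bar>s\<bar>^n / fact n) * (B * q^n)"
    using assms by (intro mult_left_mono) auto
  finally show ?thesis by (simp add: power_mult_distrib field_simps)
qed

lemma summable_exp_series:
  fixes X :: "nat \<Rightarrow> 'a::banach"
  assumes "\<And>n. norm (X n) \<le> B * q^n"
  shows "summable (\<lambda>n. (s^n / fact n) *\<^sub>R X n)"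
proof (rule summable_comparison_test)
  show "\<exists>N. \<forall>n\<ge>N. norm ((s^n / fact n) *\<^sub>R X n) \<le> B * ((\<bar>s\<bar> * q)^n / fact n)"
    by (intro exI allI impI norm_exp_series_term_le assms)
qed (rule summable_mult[OF summable_power_divide_fact])

lemma exp_tail_le:
  assumes "(q::real) \<ge> 0"
  shows "(\<Sum>n. q^(n+2) / fact (n+2)) \<le> exp q"
proof -
  have "(\<Sum>n. q^(n+2) / fact (n+2)) = exp q - (\<Sum>i<2. q^i / fact i)"
    using suminf_minus_initial_segment[OF summable_power_divide_fact[of q], of 2] exp_converges[of q]
    by (simp add: sums_iff divide_inverse mult.commute)
  also have "\<dots> \<le> exp q" using assms by (simp add: numeral_2_eq_2)
  finally show ?thesis .
qed

lemma exp_series_first_order: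
  fixes X :: "nat \<Rightarrow> 'a::banach"
  assumes X: "\<And>n. norm (X n) \<le> B * q^n" and q: "q \<ge> 0" and s: "\<bar>s\<bar> \<le> 1"
  shows "norm (exp_series s X - X 0 - s *\<^sub>R X 1) \<le> s\<^sup>2 * (B * exp q)"
proof -
  let ?f = "\<lambda>n. (s^n / fact n) *\<^sub>R X n"
  let ?g = "\<lambda>n. s\<^sup>2 * B * (q^(n+2) / fact (n+2))"
  have B: "B \<ge> 0" using X[of 0] by (simp add: order_trans[OF norm_ge_zero])
  have sum_q: "summable (\<lambda>n. q^(n+2) / fact (n+2))"
    using summable_ignore_initial_segment[OF summable_power_divide_fact[of q], of 2] .
  have tail_term: "norm (?f (n+2)) \<le> ?g n" for n
  proof -
    have "norm (?f (n+2)) = (\<bar>s\<bar>^(n+2) / fact (n+2)) * norm (X (n+2))"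
      by (simp add: power_abs abs_mult)
    also have "\<bar>s\<bar>^(n+2) = s\<^sup>2 * \<bar>s\<bar>^n"
      unfolding power_add power2_abs by (rule mult.commute)
    also have "(s\<^sup>2 * \<bar>s\<bar>^n / fact (n+2)) * norm (X (n+2)) \<le> (s\<^sup>2 * 1 / fact (n+2)) * (B * q^(n+2))"
      using X[of "n+2"] s
      by (intro mult_mono divide_right_mono mult_left_mono) (auto simp: power_le_one)
    finally show ?thesis by simp
  qed
  have sum_tail: "summable (\<lambda>n. norm (?f (n+2)))"
    by (rule summable_comparison_test[OF _ summable_mult[OF sum_q]]) (use tail_term in auto)
  have "(\<Sum>n. ?f (n+2)) = exp_series s X - (\<Sum>i<2. ?f i)"
    unfolding exp_series_def by (rule suminf_minus_initial_segment[OF summable_exp_series[OF X]])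
  also have "(\<Sum>i<2. ?f i) = X 0 + s *\<^sub>R X 1"
    by (simp add: numeral_2_eq_2)
  finally have "exp_series s X - X 0 - s *\<^sub>R X 1 = (\<Sum>n. ?f (n+2))"
    by (simp add: algebra_simps)
  also have "norm \<dots> \<le> (\<Sum>n. norm (?f (n+2)))"
    by (rule summable_norm[OF sum_tail])
  also have "\<dots> \<le> (\<Sum>n. ?g n)"
    by (rule suminf_le[OF tail_term sum_tail summable_mult[OF sum_q]])
  also have "\<dots> = s\<^sup>2 * B * (\<Sum>n. q^(n+2) / fact (n+2))"
    by (rule suminf_mult[OF sum_q])
  also have "\<dots> \<le> s\<^sup>2 * B * exp q"
    using exp_tail_le[OF q] B by (intro mult_left_mono) auto
  finally show ?thesis by simp
qed

lemma uniform_limit_exp_series: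
  fixes X :: "nat \<Rightarrow> real \<Rightarrow> 'a::banach"
  assumes "\<And>n t. t \<in> S \<Longrightarrow> norm (X n t) \<le> B * q^n"
  shows "uniform_limit S (\<lambda>n t. \<Sum>i<n. (s^i / fact i) *\<^sub>R X i t) (\<lambda>t. exp_series s (\<lambda>n. X n t))
    sequentially"
  unfolding exp_series_def
proof (rule Weierstrass_m_test)
  show "norm ((s^n / fact n) *\<^sub>R X n t) \<le> B * ((\<bar>s\<bar> * q)^n / fact n)" if "t \<in> S" for n t
    using norm_exp_series_term_le[OF assms[OF that]] .
qed (rule summable_mult[OF summable_power_divide_fact])

lemma continuous_on_exp_series:
  fixes X :: "nat \<Rightarrow> real \<Rightarrow> 'a::banach"
  assumes "\<And>n t. t \<in> S \<Longrightarrow> norm (X n t) \<le> B * q^n" and "\<And>n. continuous_on S (X n)"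
  shows "continuous_on S (\<lambda>t. exp_series s (\<lambda>n. X n t))"
  by (rule uniform_limit_theorem[OF _ uniform_limit_exp_series[OF assms(1)]])
     (auto intro!: always_eventually continuous_on_sum continuous_on_scaleR assms(2))

lemma uniform_limit_scaleR_bound:
  assumes "uniform_limit S f g sequentially" and "e > 0"
  shows "\<forall>\<^sub>F n in sequentially. \<forall>x\<in>S. \<forall>h::real. norm (h *\<^sub>R f n x - h *\<^sub>R g x) \<le> e * norm h"
  using uniform_limitD[OF assms]
proof (rule eventually_mono, intro ballI allI)
  fix n x and h :: real
  assume "\<forall>x\<in>S. dist (f n x) (g x) < e" "x \<in> S"
  then have "norm (f n x - g x) \<le> e"
    using less_imp_le by (fastforce simp: dist_norm)
  then have "norm (f n x - g x) * \<bar>h\<bar> \<le> e * \<bar>h\<bar>"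
    by (rule mult_right_mono) simp
  then show "norm (h *\<^sub>R f n x - h *\<^sub>R g x) \<le> e * norm h"
    by (simp add: scaleR_diff_right[symmetric] mult.commute)
qed

lemma has_vector_derivative_exp_series:
  fixes X Y :: "nat \<Rightarrow> real \<Rightarrow> 'a::banach"
  assumes X: "\<And>n t. t \<in> S \<Longrightarrow> norm (X n t) \<le> B * q^n"
    and Y: "\<And>n t. t \<in> S \<Longrightarrow> norm (Y n t) \<le> B * q^n"
    and deriv: "\<And>n t. t \<in> S \<Longrightarrow> (X n has_vector_derivative Y n t) (at t within S)"
    and "convex S" and t: "t \<in> S"
  shows "((\<lambda>t. exp_series s (\<lambda>n. X n t)) has_vector_derivative exp_series s (\<lambda>n. Y n t))
    (at t within S)"
proof -
  let ?G = "\<lambda>t. exp_series s (\<lambda>n. X n t)"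
  let ?G' = "\<lambda>t. exp_series s (\<lambda>n. Y n t)"
  have unif: "uniform_limit S (\<lambda>n t. \<Sum>i<n. (s^i / fact i) *\<^sub>R Y i t) ?G' sequentially"
    by (rule uniform_limit_exp_series[OF Y])
  have "\<exists>g. \<forall>x\<in>S. (\<lambda>n. (s^n / fact n) *\<^sub>R X n x) sums (g x) \<and>
        (g has_derivative (\<lambda>h. h *\<^sub>R ?G' x)) (at x within S)"
  proof (rule has_derivative_series[OF \<open>convex S\<close> _ _ t])
    show "((\<lambda>t. (s^n / fact n) *\<^sub>R X n t) has_derivative (\<lambda>h. h *\<^sub>R ((s^n / fact n) *\<^sub>R Y n x)))
        (at x within S)" if "x \<in> S" for n x
      using bounded_linear.has_vector_derivative[OF bounded_linear_scaleR_right deriv[OF that, of n]]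
      unfolding has_vector_derivative_def .
    show "\<forall>\<^sub>F n in sequentially. \<forall>x\<in>S. \<forall>h.
        norm ((\<Sum>i<n. h *\<^sub>R ((s^i / fact i) *\<^sub>R Y i x)) - h *\<^sub>R ?G' x) \<le> e * norm h"
      if "e > 0" for e
      using uniform_limit_scaleR_bound[OF unif that] by (simp add: scaleR_sum_right)
    show "(\<lambda>n. (s^n / fact n) *\<^sub>R X n t) sums ?G t"
      unfolding exp_series_def by (rule summable_sums[OF summable_exp_series[OF X[OF t]]])
  qed
  then obtain g where g: "\<And>x. x \<in> S \<Longrightarrow> (\<lambda>n. (s^n / fact n) *\<^sub>R X n x) sums (g x)"
      "\<And>x. x \<in> S \<Longrightarrow> (g has_derivative (\<lambda>h. h *\<^sub>R ?G' x)) (at x within S)"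
    by blast
  have "?G x = g x" if "x \<in> S" for x
    using g(1)[OF that] by (simp add: exp_series_def sums_iff)
  then have "(?G has_derivative (\<lambda>h. h *\<^sub>R ?G' t)) (at t within S)"
    using has_derivative_transform[OF t _ g(2)[OF t], of ?G] by metis
  then show ?thesis unfolding has_vector_derivative_def .
qed

section \<open>Uniform first-order expansions\<close>

definition uniform_expansion ::
    "real set \<Rightarrow> (real \<Rightarrow> real \<Rightarrow> 'a::real_normed_vector) \<Rightarrow> (real \<Rightarrow> 'a) \<Rightarrow> (real \<Rightarrow> 'a) \<Rightarrow> bool" where
  "uniform_expansion S X X0 X1 \<longleftrightarrow>
     (\<exists>B. \<forall>t\<in>S. norm (X0 t) \<le> B \<and> norm (X1 t) \<le> B) \<and>
     (\<exists>C. \<forall>s t. \<bar>s\<bar> \<le> 1 \<longrightarrow> t \<in> S \<longrightarrow> norm (X s t - X0 t - s *\<^sub>R X1 t) \<le> C * s\<^sup>2)"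

lemma uniform_expansionI:
  assumes "\<And>t. t \<in> S \<Longrightarrow> norm (X0 t) \<le> B" "\<And>t. t \<in> S \<Longrightarrow> norm (X1 t) \<le> B"
    "\<And>s t. \<bar>s\<bar> \<le> 1 \<Longrightarrow> t \<in> S \<Longrightarrow> norm (X s t - X0 t - s *\<^sub>R X1 t) \<le> C * s\<^sup>2"
  shows "uniform_expansion S X X0 X1"
  unfolding uniform_expansion_def using assms by blast

lemma uniform_expansionE:
  assumes "uniform_expansion S X X0 X1"
  obtains B C where "B \<ge> 0" "C \<ge> 0"
    "\<And>t. t \<in> S \<Longrightarrow> norm (X0 t) \<le> B" "\<And>t. t \<in> S \<Longrightarrow> norm (X1 t) \<le> B"
    "\<And>s t. \<bar>s\<bar> \<le> 1 \<Longrightarrow> t \<in> S \<Longrightarrow> norm (X s t - X0 t - s *\<^sub>R X1 t) \<le> C * s\<^sup>2"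
proof -
  obtain B C where B: "\<forall>t\<in>S. norm (X0 t) \<le> B \<and> norm (X1 t) \<le> B"
    and C: "\<forall>s t. \<bar>s\<bar> \<le> 1 \<longrightarrow> t \<in> S \<longrightarrow> norm (X s t - X0 t - s *\<^sub>R X1 t) \<le> C * s\<^sup>2"
    using assms unfolding uniform_expansion_def by blast
  show ?thesis
  proof (rule that[of "max B 0" "max C 0"])
    show "norm (X s t - X0 t - s *\<^sub>R X1 t) \<le> max C 0 * s\<^sup>2" if "\<bar>s\<bar> \<le> 1" "t \<in> S" for s t
    proof -
      have "C * s\<^sup>2 \<le> max C 0 * s\<^sup>2" by (intro mult_right_mono) auto
      then show ?thesis using C that by force
    qed
  qed (use B in auto)
qed

lemma uniform_expansion_bounded:
  assumes "uniform_expansion S X X0 X1"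
  obtains M where "\<And>s t. \<bar>s\<bar> \<le> 1 \<Longrightarrow> t \<in> S \<Longrightarrow> norm (X s t) \<le> M"
proof -
  obtain B C where "B \<ge> 0" "C \<ge> 0" and B: "\<And>t. t \<in> S \<Longrightarrow> norm (X0 t) \<le> B" "\<And>t. t \<in> S \<Longrightarrow> norm (X1 t) \<le> B"
    and C: "\<And>s t. \<bar>s\<bar> \<le> 1 \<Longrightarrow> t \<in> S \<Longrightarrow> norm (X s t - X0 t - s *\<^sub>R X1 t) \<le> C * s\<^sup>2"
    by (rule uniform_expansionE[OF assms]) blast
  show ?thesis
  proof (rule that[of "C + 2 * B"])
    fix s :: real and t assume s: "\<bar>s\<bar> \<le> 1" and t: "t \<in> S"
    have "C * s\<^sup>2 \<le> C" using s \<open>C \<ge> 0\<close> by (simp add: abs_square_le_1 mult_left_le)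
    moreover have "norm (s *\<^sub>R X1 t) \<le> B"
      using s B(2)[OF t] by (simp add: mult_le_one order_trans[OF mult_left_le_one_le])
    moreover have "norm (X s t) \<le> norm (X s t - X0 t - s *\<^sub>R X1 t) + norm (X0 t) + norm (s *\<^sub>R X1 t)"
      using norm_triangle_ineq[of "X s t - X0 t - s *\<^sub>R X1 t" "X0 t + s *\<^sub>R X1 t"]
        norm_triangle_ineq[of "X0 t" "s *\<^sub>R X1 t"] by (simp add: algebra_simps)
    ultimately show "norm (X s t) \<le> C + 2 * B" using C[OF s t] B(1)[OF t] by linarith
  qed
qed

lemma uniform_expansion_const:
  assumes "\<And>t. t \<in> S \<Longrightarrow> norm (X0 t) \<le> B"
  shows "uniform_expansion S (\<lambda>s t. X0 t) X0 (\<lambda>t. 0)"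
proof (rule uniform_expansionI[where B="max B 0" and C=0])
  show "norm (X0 t) \<le> max B 0" if "t \<in> S" for t
    using assms[OF that] by (rule order_trans[OF _ max.cobounded1])
qed simp_all

lemma uniform_expansion_cong:
  assumes "uniform_expansion S X X0 X1"
    and "\<And>t. t \<in> S \<Longrightarrow> X0 t = Y0 t" "\<And>t. t \<in> S \<Longrightarrow> X1 t = Y1 t"
    and "\<And>s t. \<bar>s\<bar> \<le> 1 \<Longrightarrow> t \<in> S \<Longrightarrow> X s t = Y s t"
  shows "uniform_expansion S Y Y0 Y1"
proof -
  obtain B C where "B \<ge> 0" "C \<ge> 0" and B: "\<And>t. t \<in> S \<Longrightarrow> norm (X0 t) \<le> B" "\<And>t. t \<in> S \<Longrightarrow> norm (X1 t) \<le> B"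
    and C: "\<And>s t. \<bar>s\<bar> \<le> 1 \<Longrightarrow> t \<in> S \<Longrightarrow> norm (X s t - X0 t - s *\<^sub>R X1 t) \<le> C * s\<^sup>2"
    by (rule uniform_expansionE[OF assms(1)]) blast
  show ?thesis
    by (rule uniform_expansionI[where B=B and C=C]) (use B C assms(2-4) in auto)
qed

lemma uniform_expansion_add:
  assumes "uniform_expansion S X X0 X1" "uniform_expansion S Y Y0 Y1"
  shows "uniform_expansion S (\<lambda>s t. X s t + Y s t) (\<lambda>t. X0 t + Y0 t) (\<lambda>t. X1 t + Y1 t)"
proof -
  obtain B C where "B \<ge> 0" "C \<ge> 0" and B: "\<And>t. t \<in> S \<Longrightarrow> norm (X0 t) \<le> B" "\<And>t. t \<in> S \<Longrightarrow> norm (X1 t) \<le> B"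
    and C: "\<And>s t. \<bar>s\<bar> \<le> 1 \<Longrightarrow> t \<in> S \<Longrightarrow> norm (X s t - X0 t - s *\<^sub>R X1 t) \<le> C * s\<^sup>2"
    by (rule uniform_expansionE[OF assms(1)]) blast
  obtain B' C' where "B' \<ge> 0" "C' \<ge> 0" and B': "\<And>t. t \<in> S \<Longrightarrow> norm (Y0 t) \<le> B'" "\<And>t. t \<in> S \<Longrightarrow> norm (Y1 t) \<le> B'"
    and C': "\<And>s t. \<bar>s\<bar> \<le> 1 \<Longrightarrow> t \<in> S \<Longrightarrow> norm (Y s t - Y0 t - s *\<^sub>R Y1 t) \<le> C' * s\<^sup>2"
    by (rule uniform_expansionE[OF assms(2)]) blast
  show ?thesis
  proof (rule uniform_expansionI[where B="B + B'" and C="C + C'"])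
    show "norm (X0 t + Y0 t) \<le> B + B'" "norm (X1 t + Y1 t) \<le> B + B'" if "t \<in> S" for t
      using B[OF that] B'[OF that] norm_triangle_ineq[of "X0 t" "Y0 t"]
        norm_triangle_ineq[of "X1 t" "Y1 t"] by linarith+
    show "norm (X s t + Y s t - (X0 t + Y0 t) - s *\<^sub>R (X1 t + Y1 t)) \<le> (C + C') * s\<^sup>2"
      if "\<bar>s\<bar> \<le> 1" "t \<in> S" for s t
      using C[OF that] C'[OF that]
        norm_triangle_ineq[of "X s t - X0 t - s *\<^sub>R X1 t" "Y s t - Y0 t - s *\<^sub>R Y1 t"]
      by (simp add: algebra_simps)
  qed
qed

lemma uniform_expansion_linear:
  assumes L: "bounded_linear L" and X: "uniform_expansion S X X0 X1"
  shows "uniform_expansion S (\<lambda>s t. L (X s t)) (\<lambda>t. L (X0 t)) (\<lambda>t. L (X1 t))"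
proof -
  interpret L: bounded_linear L by (rule L)
  obtain K where K: "K > 0" "\<And>x. norm (L x) \<le> norm x * K"
    using L.pos_bounded by blast
  obtain B C where "B \<ge> 0" "C \<ge> 0" and B: "\<And>t. t \<in> S \<Longrightarrow> norm (X0 t) \<le> B" "\<And>t. t \<in> S \<Longrightarrow> norm (X1 t) \<le> B"
    and C: "\<And>s t. \<bar>s\<bar> \<le> 1 \<Longrightarrow> t \<in> S \<Longrightarrow> norm (X s t - X0 t - s *\<^sub>R X1 t) \<le> C * s\<^sup>2"
    by (rule uniform_expansionE[OF X]) blast
  have LK: "norm (L x) \<le> M * K" if "norm x \<le> M" for x M
    using K(2)[of x] mult_right_mono[OF that less_imp_le[OF K(1)]] by linarith
  show ?thesis
  proof (rule uniform_expansionI[where B="B * K" and C="C * K"])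
    show "norm (L (X0 t)) \<le> B * K" "norm (L (X1 t)) \<le> B * K" if "t \<in> S" for t
      using LK[OF B(1)[OF that]] LK[OF B(2)[OF that]] by auto
    show "norm (L (X s t) - L (X0 t) - s *\<^sub>R L (X1 t)) \<le> C * K * s\<^sup>2"
      if "\<bar>s\<bar> \<le> 1" "t \<in> S" for s t
      using LK[OF C[OF that]] by (simp add: L.diff L.scaleR mult_ac)
  qed
qed

lemma bilinear_first_order_remainder:
  assumes "bounded_bilinear b"
  shows "b x y - b x0 y0 - s *\<^sub>R (b x1 y0 + b x0 y1)
    = b (x - x0 - s *\<^sub>R x1) y + b (x0 + s *\<^sub>R x1) (y - y0 - s *\<^sub>R y1) + s\<^sup>2 *\<^sub>R b x1 y1"
proof -
  interpret bounded_bilinear b by fact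
  show ?thesis
    by (simp add: add_left add_right diff_left diff_right scaleR_left scaleR_right algebra_simps
        power2_eq_square)
qed

lemma bounded_bilinear_monotone_bound:
  assumes "bounded_bilinear b"
  obtains K where "K > 0" "\<And>x y P Q. norm x \<le> P \<Longrightarrow> norm y \<le> Q \<Longrightarrow> norm (b x y) \<le> P * Q * K"
proof -
  obtain K where K: "K > 0" "\<And>x y. norm (b x y) \<le> norm x * norm y * K"
    using bounded_bilinear.pos_bounded[OF assms] by blast
  have "norm (b x y) \<le> P * Q * K" if "norm x \<le> P" "norm y \<le> Q" for x y P Q
  proof -
    have "norm x * norm y \<le> P * Q"
      using that order_trans[OF norm_ge_zero that(1)] by (intro mult_mono) auto
    then show ?thesis
      using K(2)[of x y] mult_right_mono[of _ _ K] K(1) by (meson less_imp_le order_trans)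
  qed
  with K(1) show ?thesis by (rule that)
qed

lemma uniform_expansion_bilinear:
  assumes b: "bounded_bilinear b" and X: "uniform_expansion S X X0 X1"
    and Y: "uniform_expansion S Y Y0 Y1"
  shows "uniform_expansion S (\<lambda>s t. b (X s t) (Y s t)) (\<lambda>t. b (X0 t) (Y0 t))
    (\<lambda>t. b (X1 t) (Y0 t) + b (X0 t) (Y1 t))"
proof -
  obtain K where "K > 0"
    and bK: "\<And>x y P Q. norm x \<le> P \<Longrightarrow> norm y \<le> Q \<Longrightarrow> norm (b x y) \<le> P * Q * K"
    by (rule bounded_bilinear_monotone_bound[OF b]) blast
  obtain B C where "B \<ge> 0" and B: "\<And>t. t \<in> S \<Longrightarrow> norm (X0 t) \<le> B" "\<And>t. t \<in> S \<Longrightarrow> norm (X1 t) \<le> B"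
    and C: "\<And>s t. \<bar>s\<bar> \<le> 1 \<Longrightarrow> t \<in> S \<Longrightarrow> norm (X s t - X0 t - s *\<^sub>R X1 t) \<le> C * s\<^sup>2"
    by (rule uniform_expansionE[OF X]) blast
  obtain B' C' where "B' \<ge> 0" and B': "\<And>t. t \<in> S \<Longrightarrow> norm (Y0 t) \<le> B'" "\<And>t. t \<in> S \<Longrightarrow> norm (Y1 t) \<le> B'"
    and C': "\<And>s t. \<bar>s\<bar> \<le> 1 \<Longrightarrow> t \<in> S \<Longrightarrow> norm (Y s t - Y0 t - s *\<^sub>R Y1 t) \<le> C' * s\<^sup>2"
    by (rule uniform_expansionE[OF Y]) blast
  obtain M where M: "\<And>s t. \<bar>s\<bar> \<le> 1 \<Longrightarrow> t \<in> S \<Longrightarrow> norm (Y s t) \<le> M"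
    by (rule uniform_expansion_bounded[OF Y]) blast
  show ?thesis
  proof (rule uniform_expansionI[where B="2 * B * B' * K" and C="K * (C * M + 2 * B * C' + B * B')"])
    show "norm (b (X0 t) (Y0 t)) \<le> 2 * B * B' * K" if "t \<in> S" for t
    proof -
      have "0 \<le> B * B' * K" using \<open>B \<ge> 0\<close> \<open>B' \<ge> 0\<close> \<open>K > 0\<close> by simp
      then show ?thesis using bK[OF B(1)[OF that] B'(1)[OF that]] by linarith
    qed
    show "norm (b (X1 t) (Y0 t) + b (X0 t) (Y1 t)) \<le> 2 * B * B' * K" if "t \<in> S" for t
      using bK[OF B(2)[OF that] B'(1)[OF that]] bK[OF B(1)[OF that] B'(2)[OF that]]
        norm_triangle_ineq[of "b (X1 t) (Y0 t)" "b (X0 t) (Y1 t)"] by linarith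
    show "norm (b (X s t) (Y s t) - b (X0 t) (Y0 t) - s *\<^sub>R (b (X1 t) (Y0 t) + b (X0 t) (Y1 t)))
        \<le> K * (C * M + 2 * B * C' + B * B') * s\<^sup>2" if s: "\<bar>s\<bar> \<le> 1" and t: "t \<in> S" for s t
    proof -
      have "norm (s *\<^sub>R X1 t) \<le> B"
        using s B(2)[OF t] by (simp add: mult_le_one order_trans[OF mult_left_le_one_le])
      then have "norm (X0 t + s *\<^sub>R X1 t) \<le> 2 * B"
        using B(1)[OF t] norm_triangle_ineq[of "X0 t" "s *\<^sub>R X1 t"] by linarith
      from bK[OF this C'[OF s t]]
      have "norm (b (X0 t + s *\<^sub>R X1 t) (Y s t - Y0 t - s *\<^sub>R Y1 t)) \<le> K * (2 * B * C') * s\<^sup>2"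
        by (simp add: mult_ac)
      moreover have "norm (b (X s t - X0 t - s *\<^sub>R X1 t) (Y s t)) \<le> K * (C * M) * s\<^sup>2"
        using bK[OF C[OF s t] M[OF s t]] by (simp add: mult_ac)
      moreover have "norm (s\<^sup>2 *\<^sub>R b (X1 t) (Y1 t)) \<le> K * (B * B') * s\<^sup>2"
        using mult_left_mono[OF bK[OF B(2)[OF t] B'(2)[OF t]], of "s\<^sup>2"] by (simp add: mult_ac)
      ultimately show ?thesis
        unfolding bilinear_first_order_remainder[OF b]
        by (smt (verit, best) norm_triangle_ineq distrib_left distrib_right)
    qed
  qed
qed

lemma has_real_derivative_integral_uniform_expansion:
  fixes k :: "real \<Rightarrow> real \<Rightarrow> real"
  assumes k: "uniform_expansion {a..b} k k0 k1" and "a \<le> b"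
    and int_k: "\<And>s. \<bar>s\<bar> \<le> 1 \<Longrightarrow> k s integrable_on {a..b}" and int_k1: "k1 integrable_on {a..b}"
  shows "((\<lambda>s. integral {a..b} (k s)) has_real_derivative integral {a..b} k1) (at 0)"
proof -
  obtain B C where "B \<ge> 0" "C \<ge> 0" "\<And>t. t \<in> {a..b} \<Longrightarrow> norm (k0 t) \<le> B"
    "\<And>t. t \<in> {a..b} \<Longrightarrow> norm (k1 t) \<le> B"
    and C: "\<And>s t. \<bar>s\<bar> \<le> 1 \<Longrightarrow> t \<in> {a..b} \<Longrightarrow> norm (k s t - k0 t - s *\<^sub>R k1 t) \<le> C * s\<^sup>2"
    by (rule uniform_expansionE[OF k]) blast
  have k0: "k 0 t = k0 t" if "t \<in> {a..b}" for t
    using C[of 0 t] that by simp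
  let ?F = "\<lambda>s. integral {a..b} (k s)"
  let ?D = "integral {a..b} k1"
  have quotient: "\<bar>(?F s - ?F 0) / (s - 0) - ?D\<bar> \<le> C * (b - a) * \<bar>s\<bar>"
    if s: "\<bar>s\<bar> \<le> 1" "s \<noteq> 0" for s
  proof -
    have int_diff: "(\<lambda>t. k s t - k 0 t) integrable_on {a..b}"
      using int_k[OF s(1)] int_k[of 0] by (rule integrable_diff) simp
    have int_lin: "(\<lambda>t. s * k1 t) integrable_on {a..b}"
      using integrable_cmul[OF int_k1, of s] by simp
    have int: "(\<lambda>t. k s t - k 0 t - s * k1 t) integrable_on {a..b}"
      by (rule integrable_diff[OF int_diff int_lin])
    have "?F s - ?F 0 - s * ?D = integral {a..b} (\<lambda>t. k s t - k 0 t - s * k1 t)"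
      using integral_diff[OF int_diff int_lin] integral_diff[OF int_k[OF s(1)] int_k[of 0]]
      by simp
    also have "\<bar>\<dots>\<bar> \<le> integral {a..b} (\<lambda>t. C * s\<^sup>2)"
      using integral_norm_bound_integral[OF int] C[OF s(1)] k0 by force
    also have "\<dots> = C * s\<^sup>2 * (b - a)" using \<open>a \<le> b\<close> by simp
    finally have "\<bar>?F s - ?F 0 - s * ?D\<bar> / \<bar>s\<bar> \<le> C * s\<^sup>2 * (b - a) / \<bar>s\<bar>"
      by (simp add: divide_right_mono)
    moreover have "(?F s - ?F 0) / (s - 0) - ?D = (?F s - ?F 0 - s * ?D) / s"
      using s by (simp add: field_simps)
    ultimately show ?thesis
      using s by (simp add: abs_divide power2_eq_square field_simps abs_mult_self_eq)
  qed
  have "((\<lambda>s. (?F s - ?F 0) / (s - 0) - ?D) \<longlongrightarrow> 0) (at 0)"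
  proof (rule Lim_null_comparison)
    show "\<forall>\<^sub>F s in at 0. norm ((?F s - ?F 0) / (s - 0) - ?D) \<le> C * (b - a) * \<bar>s\<bar>"
      unfolding eventually_at by (rule exI[of _ 1]) (use quotient in \<open>auto simp: dist_norm\<close>)
    show "((\<lambda>s. C * (b - a) * \<bar>s\<bar>) \<longlongrightarrow> 0) (at 0)"
      using tendsto_mult_right_zero[OF tendsto_rabs_zero[OF tendsto_ident_at]] by simp
  qed
  then show ?thesis unfolding has_field_derivative_iff LIM_zero_iff .
qed

section \<open>The matrix exponential along a curve\<close>

primrec mpow_derivative :: "(real \<Rightarrow> mat3) \<Rightarrow> (real \<Rightarrow> mat3) \<Rightarrow> nat \<Rightarrow> real \<Rightarrow> mat3" where
  "mpow_derivative A A' 0 t = 0"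
| "mpow_derivative A A' (Suc n) t = A t ** mpow_derivative A A' n t + A' t ** mpow (A t) n"

lemma has_vector_derivative_mpow:
  assumes "(A has_vector_derivative A' t) (at t within S)"
  shows "((\<lambda>t. mpow (A t) n) has_vector_derivative mpow_derivative A A' n t) (at t within S)"
proof (induction n)
  case (Suc n)
  show ?case
    unfolding mpow.simps mpow_derivative.simps
    by (rule bounded_bilinear.has_vector_derivative[OF bounded_bilinear_matrix_matrix_mult assms Suc])
qed (simp add: has_vector_derivative_const)

lemma continuous_on_mpow: "continuous_on S A \<Longrightarrow> continuous_on S (\<lambda>t. mpow (A t) n)"
  by (induction n)
     (auto intro!: continuous_intros bounded_bilinear.continuous_on[OF bounded_bilinear_matrix_matrix_mult])

lemma continuous_on_mpow_derivative:
  "continuous_on S A \<Longrightarrow> continuous_on S A' \<Longrightarrow> continuous_on S (mpow_derivative A A' n)"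
proof (induction n)
  case (Suc n)
  then have "continuous_on S (\<lambda>t. A t ** mpow_derivative A A' n t + A' t ** mpow (A t) n)"
    by (auto intro!: continuous_intros continuous_on_mpow
        bounded_bilinear.continuous_on[OF bounded_bilinear_matrix_matrix_mult])
  then show ?case by simp
qed (simp add: continuous_on_const)

lemma mexp_scaleR: "mexp (s *\<^sub>R A) = exp_series s (mpow A)"
proof -
  have "mpow (s *\<^sub>R A) n = s^n *\<^sub>R mpow A n" for n
    by (induction n) (simp_all add: matrix_scalar_ac scalar_matrix_assoc[symmetric])
  then show ?thesis by (simp add: mexp_def exp_series_def)
qed

lemma norm_mpow_le:
  assumes K: "\<And>(X::mat3) (Y::mat3). norm (X ** Y) \<le> norm X * norm Y * K"
    and c: "K * norm A \<le> c" "0 \<le> c"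
  shows "norm (mpow A n) \<le> norm (mat 1::mat3) * c^n"
proof (induction n)
  case (Suc n)
  have "norm (A ** mpow A n) \<le> (K * norm A) * norm (mpow A n)"
    using K[of A "mpow A n"] by (simp add: mult_ac)
  also have "\<dots> \<le> c * (norm (mat 1::mat3) * c^n)"
    using Suc c by (intro mult_mono) auto
  finally show ?case by (simp add: mult_ac)
qed simp

lemma norm_mpow_derivative_le:
  assumes K: "\<And>(X::mat3) (Y::mat3). norm (X ** Y) \<le> norm X * norm Y * K"
    and c: "K * norm (A t) \<le> c" "1 \<le> c" and c': "K * norm (A' t) \<le> c'" "0 \<le> c'"
  shows "norm (mpow_derivative A A' n t) \<le> real n * norm (mat 1::mat3) * c' * c^n"
proof (induction n)
  case (Suc n)
  let ?m = "norm (mat 1::mat3)"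
  have mpow: "norm (mpow (A t) n) \<le> ?m * c^n"
    by (rule norm_mpow_le[OF K c(1)]) (use c in auto)
  have "norm (A' t ** mpow (A t) n) \<le> (K * norm (A' t)) * norm (mpow (A t) n)"
    using K[of "A' t" "mpow (A t) n"] by (simp add: mult_ac)
  also have "\<dots> \<le> c' * (?m * c^n)"
    using mpow c' by (intro mult_mono) auto
  also have "\<dots> \<le> c' * (?m * c^(Suc n))"
    using c c' by (intro mult_left_mono) (auto intro: power_increasing)
  finally have "norm (A' t ** mpow (A t) n) \<le> c' * (?m * c^(Suc n))" .
  moreover have "norm (A t ** mpow_derivative A A' n t) \<le> (K * norm (A t)) * norm (mpow_derivative A A' n t)"
    using K[of "A t" "mpow_derivative A A' n t"] by (simp add: mult_ac)
  moreover have "\<dots> \<le> c * (real n * ?m * c' * c^n)"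
    using Suc c by (intro mult_mono) auto
  ultimately show ?case
    using norm_triangle_ineq[of "A t ** mpow_derivative A A' n t" "A' t ** mpow (A t) n"]
    by (simp add: algebra_simps)
qed simp

lemma real_mult_power_le_double_power: "(c::real) \<ge> 0 \<Longrightarrow> real n * c^n \<le> (2 * c)^n"
proof -
  have "real n \<le> 2^n"
    by (metis less_exp less_imp_le of_nat_less_numeral_power_cancel_iff)
  then show "c \<ge> 0 \<Longrightarrow> real n * c^n \<le> (2 * c)^n"
    by (simp add: power_mult_distrib mult_right_mono)
qed

lemma mpow_geometric_bounds:
  assumes A: "continuous_on {a..b} A" and A': "continuous_on {a..b} A'"
  obtains B q where "q \<ge> 0" "\<And>n t. t \<in> {a..b} \<Longrightarrow> norm (mpow (A t) n) \<le> B * q^n"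
    "\<And>n t. t \<in> {a..b} \<Longrightarrow> norm (mpow_derivative A A' n t) \<le> B * q^n"
proof -
  obtain K where K: "K > 0" "\<And>(X::mat3) (Y::mat3). norm (X ** Y) \<le> norm X * norm Y * K"
    using bounded_bilinear.pos_bounded[OF bounded_bilinear_matrix_matrix_mult] by blast
  obtain MA where "MA \<ge> 0" and MA: "\<And>t. t \<in> {a..b} \<Longrightarrow> norm (A t) \<le> MA"
    by (rule continuous_on_compact_bound[OF compact_Icc A]) blast
  obtain MA' where "MA' \<ge> 0" and MA': "\<And>t. t \<in> {a..b} \<Longrightarrow> norm (A' t) \<le> MA'"
    by (rule continuous_on_compact_bound[OF compact_Icc A']) blast
  define c where "c = max 1 (K * MA)"
  define c' where "c' = K * MA'"
  define m where "m = norm (mat 1::mat3)"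
  have "c \<ge> 1" "c' \<ge> 0" "m \<ge> 0" using K(1) \<open>MA' \<ge> 0\<close> by (simp_all add: c_def c'_def m_def)
  have cA: "K * norm (A t) \<le> c" "K * norm (A' t) \<le> c'" if "t \<in> {a..b}" for t
    using mult_left_mono[OF MA[OF that] less_imp_le[OF K(1)]]
      mult_left_mono[OF MA'[OF that] less_imp_le[OF K(1)]]
    by (simp_all add: c_def c'_def le_max_iff_disj)
  show ?thesis
  proof (rule that[of "2 * c" "m * (1 + c')"])
    show "0 \<le> 2 * c" using \<open>c \<ge> 1\<close> by simp
    show "norm (mpow (A t) n) \<le> m * (1 + c') * (2 * c)^n" if "t \<in> {a..b}" for t n
    proof -
      have "norm (mpow (A t) n) \<le> m * c^n"
        unfolding m_def by (rule norm_mpow_le[OF K(2) cA(1)[OF that]]) (use \<open>c \<ge> 1\<close> in simp)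
      also have "\<dots> \<le> m * (1 + c') * (2 * c)^n"
        using \<open>c \<ge> 1\<close> \<open>c' \<ge> 0\<close> \<open>m \<ge> 0\<close> mult_left_mono[of 1 "1 + c'" m]
        by (intro mult_mono power_mono) auto
      finally show ?thesis .
    qed
    show "norm (mpow_derivative A A' n t) \<le> m * (1 + c') * (2 * c)^n" if "t \<in> {a..b}" for t n
    proof -
      have "real n * c^n \<le> (2 * c)^n"
        using \<open>c \<ge> 1\<close> by (simp add: real_mult_power_le_double_power)
      moreover have "m * c' \<le> m * (1 + c')" using \<open>m \<ge> 0\<close> by (simp add: mult_left_mono)
      ultimately have "(m * c') * (real n * c^n) \<le> m * (1 + c') * (2 * c)^n"
        using \<open>c \<ge> 1\<close> \<open>c' \<ge> 0\<close> \<open>m \<ge> 0\<close> by (intro mult_mono) auto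
      moreover have "norm (mpow_derivative A A' n t) \<le> real n * m * c' * c^n"
        unfolding m_def
        by (rule norm_mpow_derivative_le[where A=A and A'=A' and t=t, OF K(2) cA(1)[OF that] \<open>c \<ge> 1\<close> cA(2)[OF that] \<open>c' \<ge> 0\<close>])
      ultimately show ?thesis by (simp add: mult_ac)
    qed
  qed
qed

context proper_interval
begin

lemma has_vector_derivative_mexp_curve:
  assumes "continuous_on {a..b} A" "continuous_on {a..b} A'"
    and "\<And>t. t \<in> {a..b} \<Longrightarrow> (A has_vector_derivative A' t) (at t within {a..b})"
    and "t \<in> {a..b}"
  shows "((\<lambda>t. mexp (s *\<^sub>R A t)) has_vector_derivative exp_series s (\<lambda>n. mpow_derivative A A' n t))
    (at t within {a..b})"
proof -
  obtain B q where "\<And>n t. t \<in> {a..b} \<Longrightarrow> norm (mpow (A t) n) \<le> B * q^n"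
    "\<And>n t. t \<in> {a..b} \<Longrightarrow> norm (mpow_derivative A A' n t) \<le> B * q^n"
    by (rule mpow_geometric_bounds[OF assms(1,2)]) blast
  from has_vector_derivative_exp_series[OF this has_vector_derivative_mpow[OF assms(3)]
      convex_real_interval(5) assms(4)]
  show ?thesis unfolding mexp_scaleR .
qed

lemma continuous_on_mexp_curve:
  assumes "continuous_on {a..b} A" "continuous_on {a..b} A'"
  shows "continuous_on {a..b} (\<lambda>t. mexp (s *\<^sub>R A t))"
    and "continuous_on {a..b} (\<lambda>t. exp_series s (\<lambda>n. mpow_derivative A A' n t))"
proof -
  obtain B q where X: "\<And>n t. t \<in> {a..b} \<Longrightarrow> norm (mpow (A t) n) \<le> B * q^n"
    and Y: "\<And>n t. t \<in> {a..b} \<Longrightarrow> norm (mpow_derivative A A' n t) \<le> B * q^n"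
    by (rule mpow_geometric_bounds[OF assms]) blast
  show "continuous_on {a..b} (\<lambda>t. mexp (s *\<^sub>R A t))"
    unfolding mexp_scaleR by (rule continuous_on_exp_series[OF X continuous_on_mpow[OF assms(1)]])
  show "continuous_on {a..b} (\<lambda>t. exp_series s (\<lambda>n. mpow_derivative A A' n t))"
    by (rule continuous_on_exp_series[OF Y continuous_on_mpow_derivative[OF assms]])
qed

lemma uniform_expansion_mexp_curve:
  assumes A: "continuous_on {a..b} A" and A': "continuous_on {a..b} A'"
  shows "uniform_expansion {a..b} (\<lambda>s t. mexp (s *\<^sub>R A t)) (\<lambda>t. mat 1) A"
    and "uniform_expansion {a..b} (\<lambda>s t. exp_series s (\<lambda>n. mpow_derivative A A' n t)) (\<lambda>t. 0) A'"
proof -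
  obtain B q where "q \<ge> 0" and B: "\<And>n t. t \<in> {a..b} \<Longrightarrow> norm (mpow (A t) n) \<le> B * q^n"
    "\<And>n t. t \<in> {a..b} \<Longrightarrow> norm (mpow_derivative A A' n t) \<le> B * q^n"
    by (rule mpow_geometric_bounds[OF assms]) blast
  obtain MA where MA: "\<And>t. t \<in> {a..b} \<Longrightarrow> norm (A t) \<le> MA"
    by (rule continuous_on_compact_bound[OF compact_Icc A]) blast
  obtain MA' where "MA' \<ge> 0" and MA': "\<And>t. t \<in> {a..b} \<Longrightarrow> norm (A' t) \<le> MA'"
    by (rule continuous_on_compact_bound[OF compact_Icc A']) blast
  show "uniform_expansion {a..b} (\<lambda>s t. mexp (s *\<^sub>R A t)) (\<lambda>t. mat 1) A"
  proof (rule uniform_expansionI[where B="max (norm (mat 1::mat3)) MA" and C="B * exp q"])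
    show "norm (mexp (s *\<^sub>R A t) - mat 1 - s *\<^sub>R A t) \<le> B * exp q * s\<^sup>2"
      if "\<bar>s\<bar> \<le> 1" "t \<in> {a..b}" for s t
      using exp_series_first_order[OF B(1)[OF that(2)] \<open>q \<ge> 0\<close> that(1)]
      by (simp add: mexp_scaleR mult_ac)
  qed (use MA in \<open>auto simp: le_max_iff_disj\<close>)
  show "uniform_expansion {a..b} (\<lambda>s t. exp_series s (\<lambda>n. mpow_derivative A A' n t)) (\<lambda>t. 0) A'"
  proof (rule uniform_expansionI[where B="MA'" and C="B * exp q"])
    show "norm (exp_series s (\<lambda>n. mpow_derivative A A' n t) - 0 - s *\<^sub>R A' t) \<le> B * exp q * s\<^sup>2"
      if "\<bar>s\<bar> \<le> 1" "t \<in> {a..b}" for s t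
      using exp_series_first_order[OF B(2)[OF that(2)] \<open>q \<ge> 0\<close> that(1)]
      by (simp add: mult_ac)
  qed (use MA' \<open>MA' \<ge> 0\<close> in auto)
qed

end

section \<open>First variation of the kinetic energy\<close>

lemma uniform_expansion_kin:
  fixes \<Lambda> \<Lambda>' :: "real \<Rightarrow> mat3"
  assumes G: "uniform_expansion S G (\<lambda>t. mat 1) A" and G': "uniform_expansion S G' (\<lambda>t. 0) A'"
    and skew: "\<And>t. t \<in> S \<Longrightarrow> transpose (A t) = - A t"
    and \<Lambda>: "\<And>t. t \<in> S \<Longrightarrow> norm (\<Lambda> t) \<le> M" and \<Lambda>': "\<And>t. t \<in> S \<Longrightarrow> norm (\<Lambda>' t) \<le> M"
  shows "uniform_expansion S (\<lambda>s t. kin J (G s t ** \<Lambda> t) (G s t ** \<Lambda>' t + G' s t ** \<Lambda> t))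
    (\<lambda>t. kin J (\<Lambda> t) (\<Lambda>' t))
    (\<lambda>t. (1/2) * (vee (transpose (\<Lambda> t) ** (A' t ** \<Lambda> t)) \<bullet> (J *v vee (transpose (\<Lambda> t) ** \<Lambda>' t))
       + vee (transpose (\<Lambda> t) ** \<Lambda>' t) \<bullet> (J *v vee (transpose (\<Lambda> t) ** (A' t ** \<Lambda> t)))))"
proof -
  note mm = bounded_bilinear_matrix_matrix_mult
  have const: "uniform_expansion S (\<lambda>s t. \<Lambda> t) \<Lambda> (\<lambda>t. 0)" "uniform_expansion S (\<lambda>s t. \<Lambda>' t) \<Lambda>' (\<lambda>t. 0)"
    using uniform_expansion_const \<Lambda> \<Lambda>' by blast+
  have "uniform_expansion S (\<lambda>s t. transpose (G s t ** \<Lambda> t) ** (G s t ** \<Lambda>' t + G' s t ** \<Lambda> t))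
      (\<lambda>t. transpose (mat 1 ** \<Lambda> t) ** (mat 1 ** \<Lambda>' t + 0 ** \<Lambda> t))
      (\<lambda>t. transpose (A t ** \<Lambda> t + mat 1 ** 0) ** (mat 1 ** \<Lambda>' t + 0 ** \<Lambda> t)
         + transpose (mat 1 ** \<Lambda> t) ** ((A t ** \<Lambda>' t + mat 1 ** 0) + (A' t ** \<Lambda> t + (0::mat3) ** 0)))"
    by (intro uniform_expansion_bilinear[OF mm] uniform_expansion_linear[OF bounded_linear_transpose]
        uniform_expansion_add uniform_expansion_bilinear[OF mm G] uniform_expansion_bilinear[OF mm G'] const)
  then have "uniform_expansion S (\<lambda>s t. transpose (G s t ** \<Lambda> t) ** (G s t ** \<Lambda>' t + G' s t ** \<Lambda> t))
      (\<lambda>t. transpose (\<Lambda> t) ** \<Lambda>' t) (\<lambda>t. transpose (\<Lambda> t) ** (A' t ** \<Lambda> t))"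
  proof (rule uniform_expansion_cong)
    fix t assume "t \<in> S"
    then have "transpose (A t ** \<Lambda> t) = - (transpose (\<Lambda> t) ** A t)"
      by (simp add: matrix_transpose_mul skew bounded_bilinear.minus_right[OF mm])
    then show "transpose (A t ** \<Lambda> t + mat 1 ** 0) ** (mat 1 ** \<Lambda>' t + 0 ** \<Lambda> t)
         + transpose (mat 1 ** \<Lambda> t) ** ((A t ** \<Lambda>' t + mat 1 ** 0) + (A' t ** \<Lambda> t + (0::mat3) ** 0))
       = transpose (\<Lambda> t) ** (A' t ** \<Lambda> t)"
      by (simp add: bounded_bilinear.minus_left[OF mm] matrix_add_ldistrib matrix_mul_assoc)
  qed simp_all
  then have "uniform_expansion S (\<lambda>s t. let W = vee (transpose (G s t ** \<Lambda> t) ** (G s t ** \<Lambda>' t + G' s t ** \<Lambda> t))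
      in (1/2) * (W \<bullet> (J *v W)))
    (\<lambda>t. let W = vee (transpose (\<Lambda> t) ** \<Lambda>' t) in (1/2) * (W \<bullet> (J *v W)))
    (\<lambda>t. (1/2) * (vee (transpose (\<Lambda> t) ** (A' t ** \<Lambda> t)) \<bullet> (J *v vee (transpose (\<Lambda> t) ** \<Lambda>' t))
       + vee (transpose (\<Lambda> t) ** \<Lambda>' t) \<bullet> (J *v vee (transpose (\<Lambda> t) ** (A' t ** \<Lambda> t)))))"
    unfolding Let_def
    by (intro uniform_expansion_linear[OF bounded_linear_mult_right]
        uniform_expansion_bilinear[OF bounded_bilinear_inner]
        uniform_expansion_linear[OF bounded_bilinear.bounded_linear_right[OF bounded_bilinear_matrix_vector_mult]]
        uniform_expansion_linear[OF bounded_linear_vee])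
  then show ?thesis unfolding kin_def .
qed

context proper_interval
begin

lemma SO3_derivative_skew:
  assumes \<Lambda>: "\<And>t. t \<in> {a..b} \<Longrightarrow> (\<Lambda> has_vector_derivative \<Lambda>' t) (at t within {a..b})"
    and rot: "\<And>t. t \<in> {a..b} \<Longrightarrow> \<Lambda> t \<in> SO3" and t: "t \<in> {a..b}"
  shows "\<Lambda>' t ** transpose (\<Lambda> t) + \<Lambda> t ** transpose (\<Lambda>' t) = 0"
proof -
  have product: "((\<lambda>t. \<Lambda> t ** transpose (\<Lambda> t)) has_vector_derivative
      \<Lambda> t ** transpose (\<Lambda>' t) + \<Lambda>' t ** transpose (\<Lambda> t)) (at t within {a..b})"
    by (rule bounded_bilinear.has_vector_derivative[OF bounded_bilinear_matrix_matrix_mult \<Lambda>[OF t]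
          bounded_linear.has_vector_derivative[OF bounded_linear_transpose \<Lambda>[OF t]]])
  have const: "((\<lambda>t. \<Lambda> t ** transpose (\<Lambda> t)) has_vector_derivative 0) (at t within {a..b})"
    by (rule has_vector_derivative_transform[OF t _ has_vector_derivative_const[of "mat 1"]])
       (simp add: SO3_transpose_mult rot)
  show ?thesis
    using vector_derivative_within_closed_interval[OF a_less_b t product]
      vector_derivative_within_closed_interval[OF a_less_b t const]
    by (simp add: add.commute)
qed

lemma has_real_derivative_integral_kin_mexp:
  fixes \<Lambda> \<Lambda>' A A' :: "real \<Rightarrow> mat3"
  assumes cont_\<Lambda>: "continuous_on {a..b} \<Lambda>" "continuous_on {a..b} \<Lambda>'"
    and cont_A: "continuous_on {a..b} A" "continuous_on {a..b} A'"
    and skew: "\<And>t. transpose (A t) = - A t"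
  shows "((\<lambda>s. integral {a..b} (\<lambda>t. kin J (mexp (s *\<^sub>R A t) ** \<Lambda> t)
      (mexp (s *\<^sub>R A t) ** \<Lambda>' t + exp_series s (\<lambda>n. mpow_derivative A A' n t) ** \<Lambda> t)))
    has_real_derivative integral {a..b} (\<lambda>t. (1/2) *
      (vee (transpose (\<Lambda> t) ** (A' t ** \<Lambda> t)) \<bullet> (J *v vee (transpose (\<Lambda> t) ** \<Lambda>' t))
       + vee (transpose (\<Lambda> t) ** \<Lambda>' t) \<bullet> (J *v vee (transpose (\<Lambda> t) ** (A' t ** \<Lambda> t)))))) (at 0)"
proof (rule has_real_derivative_integral_uniform_expansion)
  obtain M1 where M1: "\<And>t. t \<in> {a..b} \<Longrightarrow> norm (\<Lambda> t) \<le> M1"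
    by (rule continuous_on_compact_bound[OF compact_Icc cont_\<Lambda>(1)]) blast
  obtain M2 where M2: "\<And>t. t \<in> {a..b} \<Longrightarrow> norm (\<Lambda>' t) \<le> M2"
    by (rule continuous_on_compact_bound[OF compact_Icc cont_\<Lambda>(2)]) blast
  have M: "norm (\<Lambda> t) \<le> max M1 M2" "norm (\<Lambda>' t) \<le> max M1 M2" if "t \<in> {a..b}" for t
    using M1[OF that] M2[OF that] by (simp_all add: le_max_iff_disj)
  show "uniform_expansion {a..b}
      (\<lambda>s t. kin J (mexp (s *\<^sub>R A t) ** \<Lambda> t)
        (mexp (s *\<^sub>R A t) ** \<Lambda>' t + exp_series s (\<lambda>n. mpow_derivative A A' n t) ** \<Lambda> t))
      (\<lambda>t. kin J (\<Lambda> t) (\<Lambda>' t)) (\<lambda>t. (1/2) *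
      (vee (transpose (\<Lambda> t) ** (A' t ** \<Lambda> t)) \<bullet> (J *v vee (transpose (\<Lambda> t) ** \<Lambda>' t))
       + vee (transpose (\<Lambda> t) ** \<Lambda>' t) \<bullet> (J *v vee (transpose (\<Lambda> t) ** (A' t ** \<Lambda> t)))))"
    by (rule uniform_expansion_kin[OF uniform_expansion_mexp_curve[OF cont_A] skew M])
  show "(\<lambda>t. kin J (mexp (s *\<^sub>R A t) ** \<Lambda> t)
      (mexp (s *\<^sub>R A t) ** \<Lambda>' t + exp_series s (\<lambda>n. mpow_derivative A A' n t) ** \<Lambda> t))
    integrable_on {a..b}" for s
    unfolding kin_def Let_def
    by (intro integrable_continuous_interval continuous_intros continuous_on_mexp_curve[OF cont_A] cont_\<Lambda>)
  show "(\<lambda>t. (1/2) *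
      (vee (transpose (\<Lambda> t) ** (A' t ** \<Lambda> t)) \<bullet> (J *v vee (transpose (\<Lambda> t) ** \<Lambda>' t))
       + vee (transpose (\<Lambda> t) ** \<Lambda>' t) \<bullet> (J *v vee (transpose (\<Lambda> t) ** (A' t ** \<Lambda> t)))))
    integrable_on {a..b}"
    by (intro integrable_continuous_interval continuous_intros cont_A cont_\<Lambda>)
qed (use a_less_b in simp)

end

lemma action_eq_integral_kin_mexp:
  fixes \<Lambda> \<Lambda>' :: "real \<Rightarrow> mat3" and \<theta> \<theta>' :: "real \<Rightarrow> vec3"
  assumes "0 < T"
    and \<Lambda>: "\<And>t. t \<in> {0..T} \<Longrightarrow> (\<Lambda> has_vector_derivative \<Lambda>' t) (at t within {0..T})"
    and \<theta>: "\<And>t. t \<in> {0..T} \<Longrightarrow> (\<theta> has_vector_derivative \<theta>' t) (at t within {0..T})"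
    and cont_\<theta>: "continuous_on {0..T} \<theta>" "continuous_on {0..T} \<theta>'"
  shows "action J T \<Lambda> \<theta> = (\<lambda>s. integral {0..T} (\<lambda>t. kin J (mexp (s *\<^sub>R hat (\<theta> t)) ** \<Lambda> t)
    (mexp (s *\<^sub>R hat (\<theta> t)) ** \<Lambda>' t
      + exp_series s (\<lambda>n. mpow_derivative (\<lambda>t. hat (\<theta> t)) (\<lambda>t. hat (\<theta>' t)) n t) ** \<Lambda> t)))"
  unfolding action_def
proof (intro ext integral_cong)
  interpret proper_interval 0 T by standard (rule \<open>0 < T\<close>)
  fix s t assume t: "t \<in> {0..T}"
  have "((\<lambda>t. mexp (s *\<^sub>R hat (\<theta> t)) ** \<Lambda> t) has_vector_derivative mexp (s *\<^sub>R hat (\<theta> t)) ** \<Lambda>' t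
      + exp_series s (\<lambda>n. mpow_derivative (\<lambda>t. hat (\<theta> t)) (\<lambda>t. hat (\<theta>' t)) n t) ** \<Lambda> t)
    (at t within {0..T})"
    by (intro bounded_bilinear.has_vector_derivative[OF bounded_bilinear_matrix_matrix_mult]
        has_vector_derivative_mexp_curve continuous_intros cont_\<theta> t \<Lambda>
        bounded_linear.has_vector_derivative[OF bounded_linear_hat \<theta>])
  then have "tder T (varied \<Lambda> \<theta> s) t = mexp (s *\<^sub>R hat (\<theta> t)) ** \<Lambda>' t
      + exp_series s (\<lambda>n. mpow_derivative (\<lambda>t. hat (\<theta> t)) (\<lambda>t. hat (\<theta>' t)) n t) ** \<Lambda> t"
    unfolding tder_def varied_def[abs_def]
    by (rule vector_derivative_within_closed_interval[OF \<open>0 < T\<close> t])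
  then show "kin J (varied \<Lambda> \<theta> s t) (tder T (varied \<Lambda> \<theta> s) t) = kin J (mexp (s *\<^sub>R hat (\<theta> t)) ** \<Lambda> t)
    (mexp (s *\<^sub>R hat (\<theta> t)) ** \<Lambda>' t
      + exp_series s (\<lambda>n. mpow_derivative (\<lambda>t. hat (\<theta> t)) (\<lambda>t. hat (\<theta>' t)) n t) ** \<Lambda> t)"
    by (simp add: varied_def)
qed

lemma action_has_real_derivative:
  fixes \<Lambda> \<Lambda>' :: "real \<Rightarrow> mat3" and \<theta> \<theta>' :: "real \<Rightarrow> vec3"
  assumes "0 < T"
    and \<Lambda>: "\<And>t. t \<in> {0..T} \<Longrightarrow> (\<Lambda> has_vector_derivative \<Lambda>' t) (at t within {0..T})"
    and cont_\<Lambda>: "continuous_on {0..T} \<Lambda>" "continuous_on {0..T} \<Lambda>'"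
    and \<theta>: "\<And>t. t \<in> {0..T} \<Longrightarrow> (\<theta> has_vector_derivative \<theta>' t) (at t within {0..T})"
    and cont_\<theta>: "continuous_on {0..T} \<theta>" "continuous_on {0..T} \<theta>'"
  shows "(action J T \<Lambda> \<theta> has_real_derivative integral {0..T} (\<lambda>t. (1/2) *
      (vee (transpose (\<Lambda> t) ** (hat (\<theta>' t) ** \<Lambda> t)) \<bullet> (J *v vee (transpose (\<Lambda> t) ** \<Lambda>' t))
       + vee (transpose (\<Lambda> t) ** \<Lambda>' t) \<bullet> (J *v vee (transpose (\<Lambda> t) ** (hat (\<theta>' t) ** \<Lambda> t)))))) (at 0)"
proof -
  interpret proper_interval 0 T by standard (rule \<open>0 < T\<close>)
  show ?thesis
    by (subst action_eq_integral_kin_mexp[where \<Lambda>'=\<Lambda>' and \<theta>'=\<theta>'])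
       (use has_real_derivative_integral_kin_mexp[OF cont_\<Lambda> continuous_on_hat[OF cont_\<theta>(1)]
          continuous_on_hat[OF cont_\<theta>(2)] transpose_hat] assms in auto)
qed

lemma kinetic_variation_integrand:
  assumes L: "L \<in> SO3" and skew: "L' ** transpose L + L ** transpose L' = 0"
    and J: "transpose J = J"
  shows "(1/2) * (vee (transpose L ** (hat v ** L)) \<bullet> (J *v vee (transpose L ** L'))
      + vee (transpose L ** L') \<bullet> (J *v vee (transpose L ** (hat v ** L))))
    = ((L ** J ** transpose L) *v vee (L' ** transpose L)) \<bullet> v"
proof -
  define w where "w = vee (L' ** transpose L)"
  have "transpose (L' ** transpose L) = - (L' ** transpose L)"
    using skew by (simp add: matrix_transpose_mul eq_neg_iff_add_eq_0 add.commute)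
  then have "hat w = L' ** transpose L"
    unfolding w_def by (rule hat_vee)
  then have "transpose L ** L' = transpose L ** (hat w ** L)"
    by (simp add: matrix_mul_assoc[symmetric] SO3_transpose_mult[OF L])
  then have W: "vee (transpose L ** L') = transpose L *v w"
    by (simp add: SO3_conjugate_hat[OF L])
  have V: "vee (transpose L ** (hat v ** L)) = transpose L *v v"
    by (simp add: SO3_conjugate_hat[OF L])
  have "(transpose L *v w) \<bullet> (J *v (transpose L *v v)) = (transpose L *v v) \<bullet> (J *v (transpose L *v w))"
    by (metis J inner_commute inner_matrix_vector_mult)
  moreover have "(transpose L *v v) \<bullet> (J *v (transpose L *v w)) = ((L ** J ** transpose L) *v w) \<bullet> v"
    by (simp add: inner_matrix_vector_mult inner_commute matrix_vector_mul_assoc matrix_mul_assoc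
        del: transpose_matrix_vector)
  ultimately show ?thesis
    unfolding W V w_def[symmetric] by simp
qed

lemma inner_conjugate_eigenvector:
  assumes L: "L \<in> SO3" and J: "transpose J = J" and eigen: "J *v D = c *\<^sub>R D"
  shows "((L ** J ** transpose L) *v w) \<bullet> (L *v D) = c * (w \<bullet> (L *v D))"
proof -
  have "transpose (L ** J ** transpose L) = L ** J ** transpose L"
    by (simp add: matrix_transpose_mul J matrix_mul_assoc)
  moreover have "(L ** J ** transpose L) *v (L *v D) = c *\<^sub>R (L *v D)"
  proof -
    have "transpose L *v (L *v D) = D"
      by (simp only: matrix_vector_mul_assoc SO3_transpose_mult(1)[OF L] matrix_vector_mul_lid)
    moreover have "(L ** J ** transpose L) *v (L *v D) = L *v (J *v (transpose L *v (L *v D)))"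
      by (simp only: matrix_vector_mul_assoc[symmetric])
    ultimately show ?thesis by (simp add: eigen matrix_vector_mult_scaleR)
  qed
  ultimately show ?thesis
    by (simp add: inner_matrix_vector_mult)
qed

section \<open>Tangential projection and the calculus of variations\<close>

definition tangent_proj :: "'a::real_inner \<Rightarrow> 'a \<Rightarrow> 'a" where
  "tangent_proj d v = v - (v \<bullet> d) *\<^sub>R d"

lemma inner_tangent_proj_commute: "tangent_proj d u \<bullet> v = u \<bullet> tangent_proj d v"
  by (simp add: tangent_proj_def inner_diff_left inner_diff_right inner_commute)

lemma inner_tangent_proj_normal: "d \<bullet> d = 1 \<Longrightarrow> tangent_proj d v \<bullet> d = 0"
  by (simp add: tangent_proj_def inner_diff_left)

lemma inner_eq_tangent_proj_plus_normal: "u \<bullet> v = tangent_proj d u \<bullet> v + (u \<bullet> d) * (v \<bullet> d)"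
  by (simp add: tangent_proj_def inner_diff_left inner_commute[of d v])

context proper_interval
begin

lemma smooth_on_tangent_proj:
  "smooth_on {a..b} d \<Longrightarrow> smooth_on {a..b} v \<Longrightarrow> smooth_on {a..b} (\<lambda>t. tangent_proj (d t) (v t))"
  unfolding tangent_proj_def
  by (intro smooth_on_diff smooth_on_bilinear[OF bounded_bilinear_scaleR]
      smooth_on_bilinear[OF bounded_bilinear_inner])

lemma integral_inner_by_parts:
  fixes f g :: "real \<Rightarrow> 'a::real_inner"
  assumes f: "smooth_on {a..b} f" and g: "smooth_on {a..b} g" and "g a = 0" "g b = 0"
  shows "integral {a..b} (\<lambda>t. f t \<bullet> nth_vderiv 1 {a..b} g t)
    = - integral {a..b} (\<lambda>t. nth_vderiv 1 {a..b} f t \<bullet> g t)"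
proof -
  let ?f' = "nth_vderiv 1 {a..b} f" and ?g' = "nth_vderiv 1 {a..b} g"
  have "((\<lambda>t. f t \<bullet> ?g' t + ?f' t \<bullet> g t) has_integral (f b \<bullet> g b - f a \<bullet> g a)) {a..b}"
    using a_less_b
    by (intro fundamental_theorem_of_calculus bounded_bilinear.has_vector_derivative[OF bounded_bilinear_inner]
        smooth_on_has_vector_derivative f g) auto
  then have "integral {a..b} (\<lambda>t. f t \<bullet> ?g' t + ?f' t \<bullet> g t) = 0"
    using \<open>g a = 0\<close> \<open>g b = 0\<close> by (simp add: integral_unique)
  moreover have "integral {a..b} (\<lambda>t. f t \<bullet> ?g' t + ?f' t \<bullet> g t)
      = integral {a..b} (\<lambda>t. f t \<bullet> ?g' t) + integral {a..b} (\<lambda>t. ?f' t \<bullet> g t)"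
    by (intro integral_add integrable_continuous_interval continuous_intros smooth_on_imp_continuous_on
        smooth_on_vderiv f g)
  ultimately show ?thesis by linarith
qed

text \<open>Fundamental lemma of the calculus of variations; the test function is the bump (t - a)(b - t) P.\<close>
lemma smooth_orthogonal_to_test_functions_eq_0:
  fixes P :: "real \<Rightarrow> 'a::real_inner"
  assumes P: "smooth_on {a..b} P"
    and orth: "\<And>\<theta>. smooth_on {a..b} \<theta> \<Longrightarrow> \<theta> a = 0 \<Longrightarrow> \<theta> b = 0 \<Longrightarrow>
      integral {a..b} (\<lambda>t. P t \<bullet> \<theta> t) = 0"
    and t: "t \<in> {a..b}"
  shows "P t = 0"
proof -
  define \<phi> where "\<phi> t = (t - a) * (b - t)" for t
  have "smooth_on {a..b} (\<lambda>t. \<phi> t *\<^sub>R P t)"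
    unfolding \<phi>_def
    by (intro smooth_on_bilinear[OF bounded_bilinear_scaleR] smooth_on_bilinear[OF bounded_bilinear_mult]
        smooth_on_diff smooth_on_ident smooth_on_const P)
  from orth[OF this] have "integral {a..b} (\<lambda>t. \<phi> t * (P t \<bullet> P t)) = 0"
    by (simp add: \<phi>_def)
  moreover have "continuous_on {a..b} (\<lambda>t. \<phi> t * (P t \<bullet> P t))"
    unfolding \<phi>_def by (intro continuous_intros smooth_on_imp_continuous_on P)
  ultimately have zero: "\<phi> t * (P t \<bullet> P t) = 0" if "t \<in> {a..b}" for t
    using integral_eq_0_iff[of a b "\<lambda>t. \<phi> t * (P t \<bullet> P t)"] a_less_b that by (auto simp: \<phi>_def)
  have "P t = 0" if "t \<in> {a<..<b}" for t
  proof -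
    have "\<phi> t > 0" using that by (simp add: \<phi>_def)
    then show ?thesis using zero[of t] that by simp
  qed
  then show ?thesis
    using continuous_constant_on_closure[of "{a<..<b}" P 0 t] smooth_on_imp_continuous_on[OF P]
      a_less_b t by simp
qed

end

section \<open>The non-twisting rigid body\<close>

lemma tder_eq_nth_vderiv: "tder T f = nth_vderiv 1 {0..T} f"
  by (simp add: tder_def nth_vderiv.simps fun_eq_iff)

locale rigid_body_motion =
  fixes J :: mat3 and D3 :: vec3 and T :: real and \<Lambda> :: "real \<Rightarrow> mat3"
  assumes unit_D3: "norm D3 = 1"
    and J_symmetric: "transpose J = J"
    and D3_eigenvector: "\<exists>c. J *v D3 = c *\<^sub>R D3"
    and T_pos: "0 < T"
    and smooth: "smooth_on {0..T} \<Lambda>"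
    and rotation: "\<forall>t\<in>{0..T}. \<Lambda> t \<in> SO3"
begin

sublocale proper_interval 0 T
  by standard (rule T_pos)

lemma smooth_on_tder: "smooth_on {0..T} f \<Longrightarrow> smooth_on {0..T} (tder T f)"
  unfolding tder_eq_nth_vderiv by (rule smooth_on_vderiv)

lemma has_vector_derivative_tder:
  "smooth_on {0..T} f \<Longrightarrow> t \<in> {0..T} \<Longrightarrow> (f has_vector_derivative tder T f t) (at t within {0..T})"
  unfolding tder_eq_nth_vderiv by (rule smooth_on_has_vector_derivative)

lemma tder_cong: "(\<And>t. t \<in> {0..T} \<Longrightarrow> f t = g t) \<Longrightarrow> t \<in> {0..T} \<Longrightarrow> tder T f t = tder T g t"
  unfolding tder_def by (rule vector_derivative_within_cong)

lemma smooth_on_d3: "smooth_on {0..T} (d3 D3 \<Lambda>)"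
  unfolding d3_def[abs_def]
  by (rule smooth_on_bilinear[OF bounded_bilinear_matrix_vector_mult smooth smooth_on_const])

lemma smooth_on_angmom: "smooth_on {0..T} (angmom J T \<Lambda>)"
  unfolding angmom_def[abs_def] angvel_def
  by (intro smooth_on_bilinear[OF bounded_bilinear_matrix_vector_mult]
      smooth_on_bilinear[OF bounded_bilinear_matrix_matrix_mult]
      smooth_on_linear[OF bounded_linear_vee] smooth_on_linear[OF bounded_linear_transpose]
      smooth_on_tder smooth smooth_on_const)

lemma d3_unit: "t \<in> {0..T} \<Longrightarrow> d3 D3 \<Lambda> t \<bullet> d3 D3 \<Lambda> t = 1"
  using inner_matrix_vector_mult[of "\<Lambda> t" D3 "\<Lambda> t *v D3"] unit_D3 rotation
  by (simp add: d3_def matrix_vector_mul_assoc SO3_transpose_mult norm_eq_1 del: transpose_matrix_vector)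

lemma pi_par_non_twisting:
  assumes "\<forall>t\<in>{0..T}. angvel T \<Lambda> t \<bullet> d3 D3 \<Lambda> t = 0" and "t \<in> {0..T}"
  shows "pi_par J D3 T \<Lambda> t = 0"
proof -
  obtain c where "J *v D3 = c *\<^sub>R D3" using D3_eigenvector by blast
  from inner_conjugate_eigenvector[OF rotation[rule_format, OF assms(2)] J_symmetric this]
  show ?thesis using assms by (simp add: pi_par_def angmom_def d3_def)
qed

lemma tder_pi_par_non_twisting:
  assumes "\<forall>t\<in>{0..T}. angvel T \<Lambda> t \<bullet> d3 D3 \<Lambda> t = 0" and t: "t \<in> {0..T}"
  shows "tder T (pi_par J D3 T \<Lambda>) t = 0"
proof -
  have "tder T (pi_par J D3 T \<Lambda>) t = tder T (\<lambda>t. 0) t"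
    by (rule tder_cong[OF pi_par_non_twisting[OF assms(1)] t])
  also have "\<dots> = 0"
    unfolding tder_def by (rule vector_derivative_within_closed_interval[OF T_pos t has_vector_derivative_const])
  finally show ?thesis .
qed

lemma covd_pi_perp_non_twisting:
  assumes "\<forall>t\<in>{0..T}. angvel T \<Lambda> t \<bullet> d3 D3 \<Lambda> t = 0" and t: "t \<in> {0..T}"
  shows "covd D3 T \<Lambda> (pi_perp J D3 T \<Lambda>) t = tangent_proj (d3 D3 \<Lambda> t) (tder T (angmom J T \<Lambda>) t)"
proof -
  have "tder T (pi_perp J D3 T \<Lambda>) t = tder T (angmom J T \<Lambda>) t"
    by (rule tder_cong[OF _ t]) (simp add: pi_perp_def pi_par_non_twisting[OF assms(1)])
  then show ?thesis by (simp add: covd_def tangent_proj_def)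
qed

lemma action_first_variation:
  assumes \<theta>: "smooth_on {0..T} \<theta>" and "\<theta> 0 = 0" "\<theta> T = 0"
  shows "(action J T \<Lambda> \<theta> has_real_derivative
    - integral {0..T} (\<lambda>t. tder T (angmom J T \<Lambda>) t \<bullet> \<theta> t)) (at 0)"
proof -
  let ?\<Lambda>' = "tder T \<Lambda>" and ?\<theta>' = "tder T \<theta>"
  have skew: "?\<Lambda>' t ** transpose (\<Lambda> t) + \<Lambda> t ** transpose (?\<Lambda>' t) = 0" if "t \<in> {0..T}" for t
    using SO3_derivative_skew[OF has_vector_derivative_tder[OF smooth] _ that] rotation by blast
  have "(action J T \<Lambda> \<theta> has_real_derivative integral {0..T} (\<lambda>t. (1/2) *
      (vee (transpose (\<Lambda> t) ** (hat (?\<theta>' t) ** \<Lambda> t)) \<bullet> (J *v vee (transpose (\<Lambda> t) ** ?\<Lambda>' t))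
       + vee (transpose (\<Lambda> t) ** ?\<Lambda>' t) \<bullet> (J *v vee (transpose (\<Lambda> t) ** (hat (?\<theta>' t) ** \<Lambda> t))))))
    (at 0)"
    by (intro action_has_real_derivative T_pos has_vector_derivative_tder smooth_on_imp_continuous_on
        smooth_on_tder smooth \<theta>)
  also have "integral {0..T} (\<lambda>t. (1/2) *
      (vee (transpose (\<Lambda> t) ** (hat (?\<theta>' t) ** \<Lambda> t)) \<bullet> (J *v vee (transpose (\<Lambda> t) ** ?\<Lambda>' t))
       + vee (transpose (\<Lambda> t) ** ?\<Lambda>' t) \<bullet> (J *v vee (transpose (\<Lambda> t) ** (hat (?\<theta>' t) ** \<Lambda> t)))))
    = integral {0..T} (\<lambda>t. angmom J T \<Lambda> t \<bullet> ?\<theta>' t)"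
    using kinetic_variation_integrand[OF rotation[rule_format] skew J_symmetric]
    by (intro integral_cong) (simp add: angmom_def angvel_def)
  also have "\<dots> = - integral {0..T} (\<lambda>t. tder T (angmom J T \<Lambda>) t \<bullet> \<theta> t)"
    unfolding tder_eq_nth_vderiv
    by (rule integral_inner_by_parts[OF smooth_on_angmom \<theta> assms(2,3)])
  finally show ?thesis .
qed

lemma multiplier_rule_imp_tangential_orthogonal:
  assumes \<mu>: "\<And>\<delta>\<theta>. smooth_on {0..T} \<delta>\<theta> \<Longrightarrow> \<delta>\<theta> 0 = 0 \<Longrightarrow> \<delta>\<theta> T = 0 \<Longrightarrow>
      (action J T \<Lambda> \<delta>\<theta> has_real_derivative - integral {0..T} (\<lambda>t. \<mu> t * (\<delta>\<theta> t \<bullet> d3 D3 \<Lambda> t))) (at 0)"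
    and \<theta>: "smooth_on {0..T} \<theta>" "\<theta> 0 = 0" "\<theta> T = 0"
  shows "integral {0..T} (\<lambda>t. tangent_proj (d3 D3 \<Lambda> t) (tder T (angmom J T \<Lambda>) t) \<bullet> \<theta> t) = 0"
proof -
  define \<eta> where "\<eta> t = tangent_proj (d3 D3 \<Lambda> t) (\<theta> t)" for t
  have \<eta>: "smooth_on {0..T} \<eta>" "\<eta> 0 = 0" "\<eta> T = 0"
    unfolding \<eta>_def using smooth_on_tangent_proj[OF smooth_on_d3 \<theta>(1)] \<theta>(2,3)
    by (simp_all add: tangent_proj_def)
  have "- integral {0..T} (\<lambda>t. tder T (angmom J T \<Lambda>) t \<bullet> \<eta> t)
      = - integral {0..T} (\<lambda>t. \<mu> t * (\<eta> t \<bullet> d3 D3 \<Lambda> t))"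
    by (rule DERIV_unique[OF action_first_variation[OF \<eta>] \<mu>[OF \<eta>]])
  moreover have "integral {0..T} (\<lambda>t. \<mu> t * (\<eta> t \<bullet> d3 D3 \<Lambda> t)) = integral {0..T} (\<lambda>t. 0)"
    by (rule integral_cong) (simp add: \<eta>_def inner_tangent_proj_normal d3_unit)
  moreover have "integral {0..T} (\<lambda>t. tder T (angmom J T \<Lambda>) t \<bullet> \<eta> t)
      = integral {0..T} (\<lambda>t. tangent_proj (d3 D3 \<Lambda> t) (tder T (angmom J T \<Lambda>) t) \<bullet> \<theta> t)"
    by (simp add: \<eta>_def inner_tangent_proj_commute)
  ultimately show ?thesis by simp
qed

lemma tangential_zero_imp_multiplier_rule:
  assumes P: "\<forall>t\<in>{0..T}. tangent_proj (d3 D3 \<Lambda> t) (tder T (angmom J T \<Lambda>) t) = 0"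
    and \<theta>: "smooth_on {0..T} \<theta>" "\<theta> 0 = 0" "\<theta> T = 0"
  shows "(action J T \<Lambda> \<theta> has_real_derivative - integral {0..T}
    (\<lambda>t. (tder T (angmom J T \<Lambda>) t \<bullet> d3 D3 \<Lambda> t) * (\<theta> t \<bullet> d3 D3 \<Lambda> t))) (at 0)"
proof -
  have "integral {0..T} (\<lambda>t. tder T (angmom J T \<Lambda>) t \<bullet> \<theta> t)
      = integral {0..T} (\<lambda>t. (tder T (angmom J T \<Lambda>) t \<bullet> d3 D3 \<Lambda> t) * (\<theta> t \<bullet> d3 D3 \<Lambda> t))"
  proof (rule integral_cong)
    fix t assume "t \<in> {0..T}"
    then show "tder T (angmom J T \<Lambda>) t \<bullet> \<theta> t
        = (tder T (angmom J T \<Lambda>) t \<bullet> d3 D3 \<Lambda> t) * (\<theta> t \<bullet> d3 D3 \<Lambda> t)"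
      using inner_eq_tangent_proj_plus_normal[of "tder T (angmom J T \<Lambda>) t" "\<theta> t" "d3 D3 \<Lambda> t"] P
      by simp
  qed
  with action_first_variation[OF \<theta>] show ?thesis by simp
qed

lemma lagrange_dalembert_iff:
  "(\<exists>\<mu>::real \<Rightarrow> real. continuous_on {0..T} \<mu> \<and>
      (\<forall>\<delta>\<theta>::real \<Rightarrow> real^3. smooth_on {0..T} \<delta>\<theta> \<and> \<delta>\<theta> 0 = 0 \<and> \<delta>\<theta> T = 0 \<longrightarrow>
         (action J T \<Lambda> \<delta>\<theta> has_real_derivative
            - integral {0..T} (\<lambda>t. \<mu> t * (\<delta>\<theta> t \<bullet> d3 D3 \<Lambda> t))) (at 0)))
   \<longleftrightarrow> (\<forall>t\<in>{0..T}. tangent_proj (d3 D3 \<Lambda> t) (tder T (angmom J T \<Lambda>) t) = 0)"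
proof
  assume "\<exists>\<mu>. continuous_on {0..T} \<mu> \<and>
      (\<forall>\<delta>\<theta>::real \<Rightarrow> real^3. smooth_on {0..T} \<delta>\<theta> \<and> \<delta>\<theta> 0 = 0 \<and> \<delta>\<theta> T = 0 \<longrightarrow>
         (action J T \<Lambda> \<delta>\<theta> has_real_derivative
            - integral {0..T} (\<lambda>t. \<mu> t * (\<delta>\<theta> t \<bullet> d3 D3 \<Lambda> t))) (at 0))"
  then obtain \<mu> where "\<And>\<delta>\<theta>. smooth_on {0..T} \<delta>\<theta> \<Longrightarrow> \<delta>\<theta> 0 = 0 \<Longrightarrow> \<delta>\<theta> T = 0 \<Longrightarrow>
      (action J T \<Lambda> \<delta>\<theta> has_real_derivative - integral {0..T} (\<lambda>t. \<mu> t * (\<delta>\<theta> t \<bullet> d3 D3 \<Lambda> t))) (at 0)"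
    by blast
  from multiplier_rule_imp_tangential_orthogonal[OF this]
  show "\<forall>t\<in>{0..T}. tangent_proj (d3 D3 \<Lambda> t) (tder T (angmom J T \<Lambda>) t) = 0"
    by (intro ballI smooth_orthogonal_to_test_functions_eq_0[OF smooth_on_tangent_proj[OF smooth_on_d3
          smooth_on_tder[OF smooth_on_angmom]]])
next
  assume "\<forall>t\<in>{0..T}. tangent_proj (d3 D3 \<Lambda> t) (tder T (angmom J T \<Lambda>) t) = 0"
  moreover have "continuous_on {0..T} (\<lambda>t. tder T (angmom J T \<Lambda>) t \<bullet> d3 D3 \<Lambda> t)"
    by (intro continuous_intros smooth_on_imp_continuous_on smooth_on_tder smooth_on_angmom smooth_on_d3)
  ultimately show "\<exists>\<mu>. continuous_on {0..T} \<mu> \<and>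
      (\<forall>\<delta>\<theta>::real \<Rightarrow> real^3. smooth_on {0..T} \<delta>\<theta> \<and> \<delta>\<theta> 0 = 0 \<and> \<delta>\<theta> T = 0 \<longrightarrow>
         (action J T \<Lambda> \<delta>\<theta> has_real_derivative
            - integral {0..T} (\<lambda>t. \<mu> t * (\<delta>\<theta> t \<bullet> d3 D3 \<Lambda> t))) (at 0))"
    using tangential_zero_imp_multiplier_rule by blast
qed

lemma momentum_equations_iff:
  "(\<exists>\<mu>::real \<Rightarrow> real. \<forall>t\<in>{0..T}.
      covd D3 T \<Lambda> (pi_perp J D3 T \<Lambda>) t + pi_par J D3 T \<Lambda> t *\<^sub>R tder T (d3 D3 \<Lambda>) t = 0
    \<and> tder T (pi_par J D3 T \<Lambda>) t + pi_perp J D3 T \<Lambda> t \<bullet> tder T (d3 D3 \<Lambda>) t + \<mu> t = 0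
    \<and> angvel T \<Lambda> t \<bullet> d3 D3 \<Lambda> t = 0)
   \<longleftrightarrow> (\<forall>t\<in>{0..T}. angvel T \<Lambda> t \<bullet> d3 D3 \<Lambda> t = 0)
     \<and> (\<forall>t\<in>{0..T}. tangent_proj (d3 D3 \<Lambda> t) (tder T (angmom J T \<Lambda>) t) = 0)"
proof
  assume "\<exists>\<mu>. \<forall>t\<in>{0..T}.
      covd D3 T \<Lambda> (pi_perp J D3 T \<Lambda>) t + pi_par J D3 T \<Lambda> t *\<^sub>R tder T (d3 D3 \<Lambda>) t = 0
    \<and> tder T (pi_par J D3 T \<Lambda>) t + pi_perp J D3 T \<Lambda> t \<bullet> tder T (d3 D3 \<Lambda>) t + \<mu> t = 0
    \<and> angvel T \<Lambda> t \<bullet> d3 D3 \<Lambda> t = 0"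
  then obtain \<mu> where eqs: "\<forall>t\<in>{0..T}.
      covd D3 T \<Lambda> (pi_perp J D3 T \<Lambda>) t + pi_par J D3 T \<Lambda> t *\<^sub>R tder T (d3 D3 \<Lambda>) t = 0
    \<and> tder T (pi_par J D3 T \<Lambda>) t + pi_perp J D3 T \<Lambda> t \<bullet> tder T (d3 D3 \<Lambda>) t + \<mu> t = 0
    \<and> angvel T \<Lambda> t \<bullet> d3 D3 \<Lambda> t = 0" ..
  then have NT: "\<forall>t\<in>{0..T}. angvel T \<Lambda> t \<bullet> d3 D3 \<Lambda> t = 0" by blast
  with eqs show "?this \<and> (\<forall>t\<in>{0..T}. tangent_proj (d3 D3 \<Lambda> t) (tder T (angmom J T \<Lambda>) t) = 0)"
    by (simp add: pi_par_non_twisting covd_pi_perp_non_twisting)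
next
  assume "(\<forall>t\<in>{0..T}. angvel T \<Lambda> t \<bullet> d3 D3 \<Lambda> t = 0)
     \<and> (\<forall>t\<in>{0..T}. tangent_proj (d3 D3 \<Lambda> t) (tder T (angmom J T \<Lambda>) t) = 0)"
  then show "\<exists>\<mu>. \<forall>t\<in>{0..T}.
      covd D3 T \<Lambda> (pi_perp J D3 T \<Lambda>) t + pi_par J D3 T \<Lambda> t *\<^sub>R tder T (d3 D3 \<Lambda>) t = 0
    \<and> tder T (pi_par J D3 T \<Lambda>) t + pi_perp J D3 T \<Lambda> t \<bullet> tder T (d3 D3 \<Lambda>) t + \<mu> t = 0
    \<and> angvel T \<Lambda> t \<bullet> d3 D3 \<Lambda> t = 0"
    by (intro exI[of _ "\<lambda>t. - (tder T (pi_par J D3 T \<Lambda>) t + pi_perp J D3 T \<Lambda> t \<bullet> tder T (d3 D3 \<Lambda>) t)"])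
       (simp add: pi_par_non_twisting covd_pi_perp_non_twisting)
qed

lemma momentum_equations_reduced:
  "(\<forall>t\<in>{0..T}.
      covd D3 T \<Lambda> (pi_perp J D3 T \<Lambda>) t + pi_par J D3 T \<Lambda> t *\<^sub>R tder T (d3 D3 \<Lambda>) t = 0
    \<and> tder T (pi_par J D3 T \<Lambda>) t + pi_perp J D3 T \<Lambda> t \<bullet> tder T (d3 D3 \<Lambda>) t + \<mu> t = 0
    \<and> angvel T \<Lambda> t \<bullet> d3 D3 \<Lambda> t = 0)
   \<longleftrightarrow> (\<forall>t\<in>{0..T}.
      covd D3 T \<Lambda> (pi_perp J D3 T \<Lambda>) t = 0
    \<and> pi_perp J D3 T \<Lambda> t \<bullet> tder T (d3 D3 \<Lambda>) t + \<mu> t = 0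
    \<and> angvel T \<Lambda> t \<bullet> d3 D3 \<Lambda> t = 0)"
proof -
  have "(\<forall>t\<in>{0..T}. angvel T \<Lambda> t \<bullet> d3 D3 \<Lambda> t = 0) \<Longrightarrow> t \<in> {0..T} \<Longrightarrow>
      pi_par J D3 T \<Lambda> t = 0 \<and> tder T (pi_par J D3 T \<Lambda>) t = 0" for t
    by (simp add: pi_par_non_twisting tder_pi_par_non_twisting)
  then show ?thesis by fastforce
qed

end

theorem theorem5:
  fixes D1 D2 D3 :: "real^3" and J :: "real^3^3" and T :: real
    and \<Lambda> :: "real \<Rightarrow> real^3^3"
  assumes onb: "norm D1 = 1" "norm D2 = 1" "norm D3 = 1"
      "D1 \<bullet> D2 = 0" "D1 \<bullet> D3 = 0" "D2 \<bullet> D3 = 0"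
    and orient: "cross3 D1 D2 = D3"
    and Jsym: "transpose J = J"
    and Jpos: "\<forall>x. x \<noteq> 0 \<longrightarrow> x \<bullet> (J *v x) > 0"
    and Jeig: "\<exists>c. J *v D3 = c *\<^sub>R D3"
    and Tpos: "T > 0"
    and smooth: "smooth_on {0..T} \<Lambda>"
    and rot: "\<forall>t\<in>{0..T}. \<Lambda> t \<in> SO3"
  shows
   "(((\<forall>t\<in>{0..T}. angvel T \<Lambda> t \<bullet> d3 D3 \<Lambda> t = 0) \<and>
      (\<exists>\<mu>::real \<Rightarrow> real. continuous_on {0..T} \<mu> \<and>
         (\<forall>\<delta>\<theta>::real \<Rightarrow> real^3. smooth_on {0..T} \<delta>\<theta> \<and> \<delta>\<theta> 0 = 0 \<and> \<delta>\<theta> T = 0 \<longrightarrow>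
            (action J T \<Lambda> \<delta>\<theta> has_real_derivative
               - integral {0..T} (\<lambda>t. \<mu> t * (\<delta>\<theta> t \<bullet> d3 D3 \<Lambda> t))) (at 0))))
    \<longleftrightarrow>
    (\<exists>\<mu>::real \<Rightarrow> real. \<forall>t\<in>{0..T}.
        covd D3 T \<Lambda> (pi_perp J D3 T \<Lambda>) t
          + pi_par J D3 T \<Lambda> t *\<^sub>R tder T (d3 D3 \<Lambda>) t = 0
      \<and> tder T (pi_par J D3 T \<Lambda>) t + pi_perp J D3 T \<Lambda> t \<bullet> tder T (d3 D3 \<Lambda>) t + \<mu> t = 0
      \<and> angvel T \<Lambda> t \<bullet> d3 D3 \<Lambda> t = 0))
   \<and>
   (\<forall>\<mu>::real \<Rightarrow> real.
      (\<forall>t\<in>{0..T}.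
        covd D3 T \<Lambda> (pi_perp J D3 T \<Lambda>) t
          + pi_par J D3 T \<Lambda> t *\<^sub>R tder T (d3 D3 \<Lambda>) t = 0
      \<and> tder T (pi_par J D3 T \<Lambda>) t + pi_perp J D3 T \<Lambda> t \<bullet> tder T (d3 D3 \<Lambda>) t + \<mu> t = 0
      \<and> angvel T \<Lambda> t \<bullet> d3 D3 \<Lambda> t = 0)
    \<longleftrightarrow>
      (\<forall>t\<in>{0..T}.
        covd D3 T \<Lambda> (pi_perp J D3 T \<Lambda>) t = 0
      \<and> pi_perp J D3 T \<Lambda> t \<bullet> tder T (d3 D3 \<Lambda>) t + \<mu> t = 0
      \<and> angvel T \<Lambda> t \<bullet> d3 D3 \<Lambda> t = 0))"
proof -
  interpret rigid_body_motion J D3 T \<Lambda>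
    by unfold_locales (use onb(3) Jsym Jeig Tpos smooth rot in auto)
  show ?thesis
    using lagrange_dalembert_iff momentum_equations_iff momentum_equations_reduced by blast
qed

end
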